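(* Let $\mathfrak{s}\subset\mathfrak{gl}(n,F)$ be the solvable radical of the Lie algebra of an algebraic group, let $\mathfrak{n}$ be the set of nilpotent elements of $\mathfrak{s}$, and assume there is a commutative subalgebra of $\mathfrak{s}$ of semisimple matrices complementing $\mathfrak{n}$. Let $\mathfrak{h}'$ be a Cartan subalgebra of $\mathfrak{s}$ and $\mathfrak{d}'\subset\mathfrak{s}$ an abelian subalgebra of semisimple matrices with $\mathfrak{s}=\mathfrak{d}'\oplus\mathfrak{n}$ and $\mathfrak{h}' = C_{\mathfrak{s}}(\mathfrak{d}') = \mathfrak{d}'+C_{\mathfrak{n}}(\mathfrak{d}')$. Let $a_1,\dots,a_r$ be a basis of $\mathfrak{h}'$ and let $a_i = s_i + n_i$ be the Jordan decomposition of $a_i$ ($s_i$ semisimple, $n_i$ nilpotent, $[s_i,n_i]=0$). Then $\mathfrak{d}'$ is spanned by $s_1,\dots,s_r$, and $\mathfrak{n}$ is spanned by $n_1,\dots,n_r$ together with $\mathfrak{s}_1(\mathfrak{h}')$.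
   Context: $F$ is a field of characteristic $0$ with algebraic closure $\overline{F}$; the algebraic group is a subgroup of $\mathrm{GL}(n,\overline{F})$ defined over $F$ whose Lie algebra lies in $\mathfrak{gl}(n,F)$. The solvable radical is the largest solvable ideal. $C_{\mathfrak{a}}(\mathfrak{b})=\{x\in\mathfrak{a}\mid[x,y]=0\ \forall y\in\mathfrak{b}\}$. A semisimple matrix is one diagonalizable over $\overline{F}$. A Cartan subalgebra is a nilpotent subalgebra equal to its own normalizer. The Fitting 1-component of $\mathfrak{s}$ with respect to the adjoint action of the nilpotent subalgebra $\mathfrak{h}'$ is $\mathfrak{s}_1(\mathfrak{h}') = \bigcap_{i>0}[\mathfrak{h}'^i,\mathfrak{s}]$, where $[\mathfrak{h}'^i,\mathfrak{s}] = [\mathfrak{h}',[\mathfrak{h}',\cdots,[\mathfrak{h}',\mathfrak{s}]\cdots]]$ with $i$ factors $\mathfrak{h}'$. *)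

theory Defs
  imports "HOL-Analysis.Analysis" "HOL-Computational_Algebra.Polynomial"
begin

type_synonym ('a,'n) sqm = "'a^'n^'n"

definition smat :: "'a::field \<Rightarrow> ('a,'n::finite) sqm \<Rightarrow> ('a,'n) sqm" where
  "smat c A = (\<chi> i j. c * A$i$j)"

abbreviation lspan :: "('a::field,'n::finite) sqm set \<Rightarrow> ('a,'n) sqm set" where
  "lspan \<equiv> module.span smat"

abbreviation lsubspace :: "('a::field,'n::finite) sqm set \<Rightarrow> bool" where
  "lsubspace \<equiv> module.subspace smat"

abbreviation lindep :: "('a::field,'n::finite) sqm set \<Rightarrow> bool" where
  "lindep \<equiv> module.dependent smat"

definition brk :: "('a::field,'n::finite) sqm \<Rightarrow> ('a,'n) sqm \<Rightarrow> ('a,'n) sqm" where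
  "brk x y = x ** y - y ** x"

definition Brk :: "('a::field,'n::finite) sqm set \<Rightarrow> ('a,'n) sqm set \<Rightarrow> ('a,'n) sqm set" where
  "Brk A B = lspan {brk a b | a b. a \<in> A \<and> b \<in> B}"

definition lie_subalg :: "('a::field,'n::finite) sqm set \<Rightarrow> bool" where
  "lie_subalg L \<longleftrightarrow> lsubspace L \<and> (\<forall>x\<in>L. \<forall>y\<in>L. brk x y \<in> L)"

definition lie_ideal :: "('a::field,'n::finite) sqm set \<Rightarrow> ('a,'n) sqm set \<Rightarrow> bool" where
  "lie_ideal I L \<longleftrightarrow> lsubspace I \<and> I \<subseteq> L \<and> (\<forall>x\<in>L. \<forall>y\<in>I. brk x y \<in> I)"

fun derived_series :: "('a::field,'n::finite) sqm set \<Rightarrow> nat \<Rightarrow> ('a,'n) sqm set" where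
  "derived_series L 0 = L"
| "derived_series L (Suc k) = Brk (derived_series L k) (derived_series L k)"

definition lie_solvable :: "('a::field,'n::finite) sqm set \<Rightarrow> bool" where
  "lie_solvable L \<longleftrightarrow> (\<exists>k. derived_series L k = {0})"

fun lower_central :: "('a::field,'n::finite) sqm set \<Rightarrow> nat \<Rightarrow> ('a,'n) sqm set" where
  "lower_central L 0 = L"
| "lower_central L (Suc k) = Brk L (lower_central L k)"

definition lie_nilpotent :: "('a::field,'n::finite) sqm set \<Rightarrow> bool" where
  "lie_nilpotent L \<longleftrightarrow> (\<exists>k. lower_central L k = {0})"

definition solvable_radical :: "('a::field,'n::finite) sqm set \<Rightarrow> ('a,'n) sqm set \<Rightarrow> bool" where
  "solvable_radical L S \<longleftrightarrow> lie_ideal S L \<and> lie_solvable S \<and>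
     (\<forall>I. lie_ideal I L \<and> lie_solvable I \<longrightarrow> I \<subseteq> S)"

definition centralizer :: "('a::field,'n::finite) sqm set \<Rightarrow> ('a,'n) sqm set \<Rightarrow> ('a,'n) sqm set" where
  "centralizer A B = {x \<in> A. \<forall>y\<in>B. brk x y = 0}"

definition normalizer :: "('a::field,'n::finite) sqm set \<Rightarrow> ('a,'n) sqm set \<Rightarrow> ('a,'n) sqm set" where
  "normalizer L H = {x \<in> L. \<forall>y\<in>H. brk x y \<in> H}"

definition cartan_subalg :: "('a::field,'n::finite) sqm set \<Rightarrow> ('a,'n) sqm set \<Rightarrow> bool" where
  "cartan_subalg L H \<longleftrightarrow> lie_subalg H \<and> H \<subseteq> L \<and> lie_nilpotent H \<and> normalizer L H = H"

fun iter_brk :: "('a::field,'n::finite) sqm set \<Rightarrow> nat \<Rightarrow> ('a,'n) sqm set \<Rightarrow> ('a,'n) sqm set" where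
  "iter_brk H 0 S = S"
| "iter_brk H (Suc i) S = Brk H (iter_brk H i S)"

definition fitting_one :: "('a::field,'n::finite) sqm set \<Rightarrow> ('a,'n) sqm set \<Rightarrow> ('a,'n) sqm set" where
  "fitting_one H S = (\<Inter>i\<in>{i. i > 0}. iter_brk H i S)"

definition setsum :: "('a::field,'n::finite) sqm set \<Rightarrow> ('a,'n) sqm set \<Rightarrow> ('a,'n) sqm set" where
  "setsum A B = {a + b | a b. a \<in> A \<and> b \<in> B}"

definition is_alg_closure :: "('f::field \<Rightarrow> 'k::field) \<Rightarrow> bool" where
  "is_alg_closure emb \<longleftrightarrow>
     emb 0 = 0 \<and> emb 1 = 1 \<and> (\<forall>x y. emb (x + y) = emb x + emb y) \<and> (\<forall>x y. emb (x * y) = emb x * emb y)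
   \<and> (\<forall>p :: 'k poly. degree p > 0 \<longrightarrow> (\<exists>x. poly p x = 0))
   \<and> (\<forall>x :: 'k. \<exists>p :: 'f poly. p \<noteq> 0 \<and> poly (map_poly emb p) x = 0)"

definition map_mat :: "('f \<Rightarrow> 'k) \<Rightarrow> 'f^'n::finite^'m::finite \<Rightarrow> 'k^'n^'m" where
  "map_mat emb A = (\<chi> i j. emb (A$i$j))"

definition diagonal_mat :: "('k::zero,'n::finite) sqm \<Rightarrow> bool" where
  "diagonal_mat D \<longleftrightarrow> (\<forall>i j. i \<noteq> j \<longrightarrow> D$i$j = 0)"

definition semisimple_mat :: "('f::field \<Rightarrow> 'k::field) \<Rightarrow> ('f,'n::finite) sqm \<Rightarrow> bool" where
  "semisimple_mat emb A \<longleftrightarrow> (\<exists>(P :: ('k,'n) sqm) D. invertible P \<and> diagonal_mat D \<and>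
      P ** map_mat emb A = D ** P)"

definition nilpotent_mat :: "('a::field,'n::finite) sqm \<Rightarrow> bool" where
  "nilpotent_mat A \<longleftrightarrow> (\<exists>k. ((\<lambda>M. A ** M) ^^ k) (mat 1) = 0)"

text \<open>Polynomial expressions in the matrix entries x_ij with coefficients in 'a.\<close>
datatype ('a,'i) mexpr = MC 'a | MV 'i | MAdd "('a,'i) mexpr" "('a,'i) mexpr"
  | MMul "('a,'i) mexpr" "('a,'i) mexpr" | MNeg "('a,'i) mexpr"

fun meval :: "('a \<Rightarrow> 'k::comm_ring_1) \<Rightarrow> 'k^'n^'n \<Rightarrow> ('a,'n \<times> 'n) mexpr \<Rightarrow> 'k" where
  "meval c g (MC a) = c a"
| "meval c g (MV (i,j)) = g$i$j"
| "meval c g (MAdd p q) = meval c g p + meval c g q"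
| "meval c g (MMul p q) = meval c g p * meval c g q"
| "meval c g (MNeg p) = - meval c g p"

fun mdiff :: "('a \<Rightarrow> 'k::comm_ring_1) \<Rightarrow> 'k^'n^'n \<Rightarrow> ('a,'n \<times> 'n) mexpr \<Rightarrow> 'k" where
  "mdiff c X (MC a) = 0"
| "mdiff c X (MV (i,j)) = X$i$j"
| "mdiff c X (MAdd p q) = mdiff c X p + mdiff c X q"
| "mdiff c X (MMul p q) = meval c (mat 1) p * mdiff c X q + mdiff c X p * meval c (mat 1) q"
| "mdiff c X (MNeg p) = - mdiff c X p"

definition alg_group_over :: "('f::field \<Rightarrow> 'k::field) \<Rightarrow> ('k,'n::finite) sqm set \<Rightarrow> bool" where
  "alg_group_over emb G \<longleftrightarrow>
     mat 1 \<in> G \<and> (\<forall>g\<in>G. \<forall>h\<in>G. g ** h \<in> G) \<and> (\<forall>g\<in>G. invertible g \<and> matrix_inv g \<in> G)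
   \<and> (\<exists>S :: ('f,'n \<times> 'n) mexpr set. G = {g. invertible g \<and> (\<forall>p\<in>S. meval emb g p = 0)})"

definition lie_alg_K :: "('k::field,'n::finite) sqm set \<Rightarrow> ('k,'n) sqm set" where
  "lie_alg_K G = {X. \<forall>p :: ('k,'n \<times> 'n) mexpr. (\<forall>g\<in>G. meval id g p = 0) \<longrightarrow> mdiff id X p = 0}"

definition lie_alg_F :: "('f::field \<Rightarrow> 'k::field) \<Rightarrow> ('k,'n::finite) sqm set \<Rightarrow> ('f,'n) sqm set" where
  "lie_alg_F emb G = {A. map_mat emb A \<in> lie_alg_K G}"

end

theory Submission
  imports Defs
begin

text \<open>Over the algebraic closure a semisimple \<open>x \<in> \<dd>'\<close> is diagonalizable, hence so is
  \<open>ad x\<close>, which therefore maps its image \<open>[x, \<ss>]\<close> onto itself; this image lies in every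
  \<open>[\<hh>'\<^sup>i, \<ss>]\<close>, and correcting by such images for the elements of a basis of \<open>\<dd>'\<close> one at a time
  gives \<open>\<ss> = \<hh>' + \<ss>\<^sub>1(\<hh>')\<close>. Lie's theorem, proved with the trace argument of Lie's
  invariance lemma and an induction along a flag, shows that the nilpotent elements \<open>\<nn>\<close> of the
  solvable \<open>\<ss>\<close> form a subspace containing \<open>[\<ss>, \<ss>] \<supseteq> \<ss>\<^sub>1(\<hh>')\<close>. Each \<open>a\<^sub>i \<in> \<hh>' = \<dd>' + C\<^sub>\<nn>(\<dd>')\<close>
  is a sum of a semisimple and a commuting nilpotent element, so by uniqueness of the Jordan
  decomposition \<open>s\<^sub>i \<in> \<dd>'\<close> and \<open>n\<^sub>i \<in> \<nn>\<close>. As \<open>\<dd>' \<inter> \<nn> = 0\<close>, the decompositions of elements of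
  \<open>\<dd>' \<subseteq> \<hh>'\<close> and of \<open>\<nn> \<subseteq> \<hh>' + \<ss>\<^sub>1(\<hh>')\<close> along the basis \<open>a\<^sub>i\<close> give the two spanning statements.\<close>

section \<open>Matrices as a vector space\<close>

lemma smat_component [simp]: "smat c A $ i $ j = c * A $ i $ j"
  by (simp add: smat_def)

interpretation gl: vector_space "smat :: 'a::field \<Rightarrow> ('a,'n::finite) sqm \<Rightarrow> ('a,'n) sqm"
  by unfold_locales (simp_all add: vec_eq_iff algebra_simps)

definition mat_unit :: "'n \<Rightarrow> 'n \<Rightarrow> ('a::field,'n::finite) sqm" where
  "mat_unit a b = (\<chi> i j. if i = a \<and> j = b then 1 else 0)"

definition mat_units :: "('a::field,'n::finite) sqm set" where
  "mat_units = (\<lambda>(a,b). mat_unit a b) ` UNIV"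

lemma inj_mat_unit: "inj (\<lambda>(a,b). mat_unit a b :: ('a::field,'n::finite) sqm)"
proof (rule injI, clarify)
  fix a b c d :: 'n
  assume "(mat_unit a b :: ('a,'n) sqm) = mat_unit c d"
  hence "(mat_unit a b :: ('a,'n) sqm) $ a $ b = mat_unit c d $ a $ b" by simp
  thus "a = c \<and> b = d" by (simp add: mat_unit_def split: if_splits)
qed

lemma mat_unit_expansion:
  "(\<Sum>p\<in>UNIV. smat (A $ fst p $ snd p) (mat_unit (fst p) (snd p))) = (A::('a::field,'n::finite) sqm)"
proof -
  have "(\<Sum>p\<in>UNIV. smat (A $ fst p $ snd p) (mat_unit (fst p) (snd p))) $ i $ j = A $ i $ j" for i j
  proof -
    have "(\<Sum>p\<in>UNIV. smat (A $ fst p $ snd p) (mat_unit (fst p) (snd p))) $ i $ j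
       = (\<Sum>p\<in>UNIV. A $ fst p $ snd p * (if i = fst p \<and> j = snd p then 1 else 0))"
      by (simp add: sum_component mat_unit_def)
    also have "\<dots> = (\<Sum>p\<in>UNIV. if p = (i,j) then A $ i $ j else 0)"
      by (rule sum.cong) auto
    also have "\<dots> = A $ i $ j" by simp
    finally show ?thesis .
  qed
  thus ?thesis by (simp add: vec_eq_iff)
qed

lemma independent_mat_units: "\<not> gl.dependent (mat_units :: ('a::field,'n::finite) sqm set)"
proof (rule gl.independent_if_scalars_zero)
  show "finite (mat_units :: ('a,'n) sqm set)" by (simp add: mat_units_def)
next
  fix f :: "('a,'n) sqm \<Rightarrow> 'a" and x :: "('a,'n) sqm"
  assume eq: "(\<Sum>x\<in>mat_units. smat (f x) x) = 0" and x: "x \<in> mat_units"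
  obtain a b where xab: "x = mat_unit a b" using x by (auto simp: mat_units_def)
  have "0 = (\<Sum>x\<in>mat_units. smat (f x) x) $ a $ b" using eq by simp
  also have "\<dots> = (\<Sum>p\<in>UNIV. f (mat_unit (fst p) (snd p)) * (mat_unit (fst p) (snd p) :: ('a,'n) sqm) $ a $ b)"
    unfolding mat_units_def
    by (subst sum.reindex[OF inj_mat_unit]) (simp add: sum_component case_prod_beta)
  also have "\<dots> = (\<Sum>p\<in>UNIV. if p = (a,b) then f (mat_unit a b) else 0)"
    by (rule sum.cong) (auto simp: mat_unit_def)
  also have "\<dots> = f x" by (simp add: xab)
  finally show "f x = 0" by simp
qed

lemma span_mat_units: "gl.span (mat_units :: ('a::field,'n::finite) sqm set) = UNIV"
proof -
  have "(\<Sum>p\<in>UNIV. smat (A $ fst p $ snd p) (mat_unit (fst p) (snd p))) \<in> gl.span mat_units"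
    for A :: "('a,'n) sqm"
    by (intro gl.span_sum gl.span_scale gl.span_base) (auto simp: mat_units_def)
  thus ?thesis by (auto simp: mat_unit_expansion)
qed

interpretation gl: finite_dimensional_vector_space
  "smat :: 'a::field \<Rightarrow> ('a,'n::finite) sqm \<Rightarrow> ('a,'n) sqm" mat_units
proof
  show "finite (mat_units :: ('a,'n) sqm set)" by (simp add: mat_units_def)
qed (use independent_mat_units span_mat_units in auto)

interpretation gl: finite_dimensional_vector_space_pair
  "smat :: 'a::field \<Rightarrow> ('a,'n::finite) sqm \<Rightarrow> ('a,'n) sqm" mat_units
  "smat :: 'a::field \<Rightarrow> ('a,'n::finite) sqm \<Rightarrow> ('a,'n) sqm" mat_units ..

lemma smat_mult_left: "smat c A ** B = smat c (A ** B)"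
  by (simp add: vec_eq_iff matrix_matrix_mult_def sum_distrib_left mult.assoc)

lemma smat_mult_right: "A ** smat c B = smat c (A ** B)"
  for A :: "('a::field,'n::finite) sqm"
  by (simp add: vec_eq_iff matrix_matrix_mult_def sum_distrib_left mult.left_commute)

lemma smat_mult_vec: "smat c A *v w = c *s (A *v w)"
  by (simp add: vec_eq_iff matrix_vector_mult_def sum_distrib_left mult.assoc)

lemma smat_diff: "smat c (A - B) = smat c A - smat c B"
  by (simp add: vec_eq_iff algebra_simps)

lemma matrix_add_rdistrib: "(B + C) ** A = B ** A + C ** A"
  by (vector matrix_matrix_mult_def sum.distrib[symmetric] field_simps)

lemma matrix_diff_ldistrib: "A ** (B - C) = A ** B - A ** C"
  for A :: "('a::field,'n::finite) sqm"
  by (vector matrix_matrix_mult_def sum_subtractf[symmetric] field_simps)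

lemma matrix_diff_rdistrib: "(B - C) ** A = B ** A - C ** A"
  for A :: "('a::field,'n::finite) sqm"
  by (vector matrix_matrix_mult_def sum_subtractf[symmetric] field_simps)

lemma mat_mult_commute: "mat c ** M = M ** mat c"
  for M :: "('a::field,'n::finite) sqm"
  by (simp add: vec_eq_iff matrix_matrix_mult_def mat_def if_distrib if_distribR mult.commute
      cong: if_cong)

lemma mat_mult_vec: "mat c *v v = c *s v"
  by (simp add: vec_eq_iff matrix_vector_mult_def mat_def if_distrib if_distribR cong: if_cong)

lemma column_matrix_mult: "column j (A ** B) = A *v column j B"
  by (simp add: vec_eq_iff column_def matrix_matrix_mult_def matrix_vector_mult_def)

lemma brk_add_right: "brk a (y + z) = brk a y + brk a z"
  by (simp add: brk_def matrix_add_ldistrib matrix_add_rdistrib)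

lemma brk_diff_right: "brk a (y - z) = brk a y - brk a z"
  by (simp add: brk_def matrix_diff_ldistrib matrix_diff_rdistrib)

lemma brk_smat_right: "brk a (smat c y) = smat c (brk a y)"
  by (simp add: brk_def smat_mult_left smat_mult_right smat_diff)

lemma brk_antisym: "brk a b = - brk b a"
  by (simp add: brk_def)

lemma brk_0_right [simp]: "brk a 0 = 0"
  by (simp add: brk_def)

lemma brk_eq_0_iff: "brk a b = 0 \<longleftrightarrow> a ** b = b ** a"
  by (simp add: brk_def)

lemma brk_mult_vec: "brk A B *v w = A *v (B *v w) - B *v (A *v w)"
  by (simp add: brk_def matrix_vector_mult_diff_rdistrib matrix_vector_mul_assoc)

lemma brk_commute_brk:
  fixes x y w :: "('a::field,'n::finite) sqm"
  assumes "brk x y = 0"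
  shows "brk y (brk x w) = brk x (brk y w)"
proof -
  have xy: "x ** y = y ** x" using assms by (simp add: brk_def)
  have wxy: "(w ** x) ** y = (w ** y) ** x" by (metis matrix_mul_assoc xy)
  show ?thesis
    by (simp add: brk_def matrix_diff_ldistrib matrix_diff_rdistrib matrix_mul_assoc xy wxy)
qed

lemma linear_brk: "Vector_Spaces.linear smat smat (brk (x :: ('a::field,'n::finite) sqm))"
  unfolding linear_iff_module_hom module_hom_def module_hom_axioms_def
  by (simp add: gl.module_axioms brk_add_right brk_smat_right)

abbreviation iter_mv :: "('a::field,'n::finite) sqm \<Rightarrow> nat \<Rightarrow> 'a^'n \<Rightarrow> 'a^'n" where
  "iter_mv X k w \<equiv> ((*v) X ^^ k) w"

lemma iter_mv_Suc_right: "iter_mv X (Suc k) w = iter_mv X k (X *v w)"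
  by (simp add: funpow_Suc_right del: funpow.simps)

lemma iter_mv_zero [simp]: "iter_mv X k 0 = 0"
  by (induction k) auto

lemma iter_mv_diff: "iter_mv X k (x - y) = iter_mv X k x - iter_mv X k y"
  by (induction k) (auto simp: matrix_vector_mult_diff_distrib)

lemma iter_mv_scale: "iter_mv X k (c *s x) = c *s iter_mv X k x"
  by (induction k) (auto simp: vec.scale)

lemma iter_mv_commute: "X ** Y = Y ** X \<Longrightarrow> iter_mv X k (Y *v w) = Y *v iter_mv X k w"
  by (induction k) (auto simp: matrix_vector_mul_assoc)

lemma iter_mv_smat: "iter_mv (smat c A) k w = c ^ k *s iter_mv A k w"
  by (induction k) (simp_all add: smat_mult_vec vec.scale mult.commute)

lemma iter_mv_mat_power: "((\<lambda>M. A ** M) ^^ k) (mat 1) *v w = iter_mv A k w"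
proof (induction k arbitrary: w)
  case (Suc k)
  thus ?case by (simp flip: matrix_vector_mul_assoc)
qed simp

lemma nilpotent_mat_iff_iter_mv: "nilpotent_mat A \<longleftrightarrow> (\<exists>k. \<forall>w. iter_mv A k w = 0)"
  unfolding nilpotent_mat_def by (metis iter_mv_mat_power matrix_eq matrix_vector_mult_0)

lemma nilpotent_mat_smat: "nilpotent_mat A \<Longrightarrow> nilpotent_mat (smat c A)"
  unfolding nilpotent_mat_iff_iter_mv by (auto simp: iter_mv_smat)

lemma nilpotent_mat_0: "nilpotent_mat (0 :: ('a::field,'n::finite) sqm)"
  unfolding nilpotent_mat_iff_iter_mv by (rule exI[of _ 1]) simp

lemma iter_mv_diff_commuting:
  fixes U V :: "('a::field,'n::finite) sqm"
  assumes UV: "U ** V = V ** U"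
  shows "iter_mv U a w = 0 \<Longrightarrow> iter_mv V b w = 0 \<Longrightarrow> iter_mv (U - V) (a + b) w = 0"
proof (induction "a + b" arbitrary: a b w)
  case (Suc n)
  show ?case
  proof (cases "a = 0 \<or> b = 0")
    case True
    thus ?thesis using Suc.prems by auto
  next
    case False
    then obtain a' b' where a: "a = Suc a'" and b: "b = Suc b'"
      by (metis not0_implies_Suc)
    have "iter_mv (U - V) (a + b) w
        = iter_mv (U - V) (a' + b) (U *v w) - iter_mv (U - V) (a + b') (V *v w)"
      using a b by (simp add: iter_mv_Suc_right matrix_vector_mult_diff_rdistrib iter_mv_diff
          del: funpow.simps)
    also have "iter_mv (U - V) (a' + b) (U *v w) = 0"
      using Suc a iter_mv_commute[OF UV[symmetric], of b w]
      by (intro Suc.hyps) (simp_all add: iter_mv_Suc_right del: funpow.simps)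
    also have "iter_mv (U - V) (a + b') (V *v w) = 0"
      using Suc b iter_mv_commute[OF UV, of a w]
      by (intro Suc.hyps) (simp_all add: iter_mv_Suc_right del: funpow.simps)
    finally show ?thesis by simp
  qed
qed simp

section \<open>Uniqueness of the Jordan decomposition\<close>

definition diagonalizable :: "('a::field,'n::finite) sqm \<Rightarrow> bool" where
  "diagonalizable X \<longleftrightarrow> (\<exists>P :: ('a,'n) sqm. \<exists>D. invertible P \<and> diagonal_mat D \<and> P ** X = D ** P)"

lemma diagonal_mat_mult_vec: "diagonal_mat D \<Longrightarrow> (D *v y) $ i = D $ i $ i * y $ i"
  unfolding diagonal_mat_def matrix_vector_mult_def
  by (simp add: sum.remove[of UNIV i])

lemma diagonal_mat_mult_right: "diagonal_mat D \<Longrightarrow> column j (A ** D) = D $ j $ j *s column j A"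
  for A :: "('a::field,'n::finite) sqm"
  unfolding diagonal_mat_def
  by (simp add: vec_eq_iff column_def matrix_matrix_mult_def sum.remove[of UNIV j] mult.commute)

lemma iter_mv_diagonal: "diagonal_mat D \<Longrightarrow> iter_mv D k y $ i = (D $ i $ i) ^ k * y $ i"
  by (induction k) (auto simp: diagonal_mat_mult_vec)

lemma invertible_mult_vec_eq_0: "invertible P \<Longrightarrow> P *v x = 0 \<Longrightarrow> x = 0"
  for P :: "('a::field,'n::finite) sqm"
  by (metis invertible_def matrix_vector_mul_assoc matrix_vector_mul_lid matrix_vector_mult_0_right)

lemma diagonalizable_eigen_if_iter_mv:
  fixes X :: "('a::field,'n::finite) sqm"
  assumes "diagonalizable X" and z: "iter_mv (X - mat \<mu>) k v = 0"
  shows "X *v v = \<mu> *s v"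
proof -
  obtain P D :: "('a,'n) sqm" where P: "invertible P" and D: "diagonal_mat D" and PX: "P ** X = D ** P"
    using assms(1) by (auto simp: diagonalizable_def)
  let ?D = "D - mat \<mu>"
  have PX': "P ** (X - mat \<mu>) = ?D ** P"
    by (simp add: matrix_diff_ldistrib matrix_diff_rdistrib PX mat_mult_commute)
  have dD: "diagonal_mat ?D" using D by (simp add: diagonal_mat_def mat_def)
  have "iter_mv ?D k (P *v v) = P *v iter_mv (X - mat \<mu>) k v"
    by (induction k) (simp_all add: matrix_vector_mul_assoc PX')
  hence "\<forall>i. (?D $ i $ i) ^ k * (P *v v) $ i = 0"
    using z iter_mv_diagonal[OF dD] by (metis matrix_vector_mult_0_right vec_eq_iff zero_index)
  hence "\<forall>i. ?D $ i $ i * (P *v v) $ i = 0"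
    by (metis mult_eq_0_iff power_eq_0_iff)
  hence "?D *v (P *v v) = 0" by (simp add: vec_eq_iff diagonal_mat_mult_vec[OF dD])
  hence "P *v ((X - mat \<mu>) *v v) = 0"
    by (simp add: matrix_vector_mul_assoc PX')
  hence "(X - mat \<mu>) *v v = 0" using P invertible_mult_vec_eq_0 by blast
  thus ?thesis by (simp add: matrix_vector_mult_diff_rdistrib mat_mult_vec)
qed

text \<open>The columns of the inverse of a diagonalizing matrix are eigenvectors spanning the space.\<close>

lemma diagonalizable_eq_on_eigenvectors:
  fixes S A B :: "('a::field,'n::finite) sqm"
  assumes "diagonalizable S" and eq: "\<And>v \<mu>. S *v v = \<mu> *s v \<Longrightarrow> A *v v = B *v v"
  shows "A = B"
proof -
  obtain P D :: "('a,'n) sqm" where P: "invertible P" and D: "diagonal_mat D" and PS: "P ** S = D ** P"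
    using assms(1) by (auto simp: diagonalizable_def)
  obtain Q where PQ: "P ** Q = mat 1" and QP: "Q ** P = mat 1"
    using P by (auto simp: invertible_def)
  have SQ: "S ** Q = Q ** D"
  proof -
    have "S ** Q = Q ** (P ** S) ** Q" by (simp add: matrix_mul_assoc QP)
    also have "\<dots> = Q ** D" by (simp add: PS matrix_mul_assoc[symmetric] PQ)
    finally show ?thesis .
  qed
  have "column j (A ** Q) = column j (B ** Q)" for j
  proof -
    have "S *v column j Q = D $ j $ j *s column j Q"
      using column_matrix_mult[of j S Q] diagonal_mat_mult_right[OF D, of j Q] SQ by simp
    hence "A *v column j Q = B *v column j Q" by (rule eq)
    thus ?thesis by (simp add: column_matrix_mult)
  qed
  hence "A ** Q = B ** Q" by (simp add: vec_eq_iff column_def)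
  hence "A ** Q ** P = B ** Q ** P" by simp
  thus ?thesis by (simp add: matrix_mul_assoc[symmetric] QP)
qed

lemma jordan_eigenvector:
  fixes X M S Q :: "('a::field,'n::finite) sqm"
  assumes X: "diagonalizable X" and M: "nilpotent_mat M" and Q: "nilpotent_mat Q"
    and XM: "X ** M = M ** X" and SQ: "S ** Q = Q ** S" and eq: "X + M = S + Q"
    and Sv: "S *v v = \<mu> *s v"
  shows "X *v v = \<mu> *s v"
proof -
  obtain kq where kq: "\<And>w. iter_mv Q kq w = 0" using Q by (auto simp: nilpotent_mat_iff_iter_mv)
  obtain km where km: "\<And>w. iter_mv M km w = 0" using M by (auto simp: nilpotent_mat_iff_iter_mv)
  let ?A = "S + Q - mat \<mu>"
  have SQv: "S *v iter_mv Q k v = \<mu> *s iter_mv Q k v" for k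
    using iter_mv_commute[OF SQ[symmetric], of k v] Sv iter_mv_scale by metis
  have "iter_mv ?A k v = iter_mv Q k v" for k
    by (induction k)
      (simp_all add: matrix_vector_mult_diff_rdistrib matrix_vector_mult_add_rdistrib SQv mat_mult_vec)
  hence A: "iter_mv ?A kq v = 0" using kq by simp
  have "?A ** M = M ** ?A"
    by (simp add: eq[symmetric] matrix_add_rdistrib matrix_add_ldistrib matrix_diff_rdistrib
        matrix_diff_ldistrib XM mat_mult_commute)
  from iter_mv_diff_commuting[OF this A km]
  have "iter_mv (X - mat \<mu>) (kq + km) v = 0" by (simp add: eq[symmetric])
  thus ?thesis by (rule diagonalizable_eigen_if_iter_mv[OF X])
qed

lemma jordan_decomposition_unique:
  fixes X M S Q :: "('a::field,'n::finite) sqm"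
  assumes "diagonalizable X" "diagonalizable S" "nilpotent_mat M" "nilpotent_mat Q"
    and "X ** M = M ** X" "S ** Q = Q ** S" "X + M = S + Q"
  shows "X = S"
  using assms(2) by (rule diagonalizable_eq_on_eigenvectors)
    (use jordan_eigenvector[OF assms(1,3-)] in simp)

lemma diagonalizable_brk_brk_eq_0:
  fixes X Y :: "('a::field,'n::finite) sqm"
  assumes X: "diagonalizable X" and XXY: "brk X (brk X Y) = 0"
  shows "brk X Y = 0"
proof (rule diagonalizable_eq_on_eigenvectors[OF X])
  fix v \<mu> assume Xv: "X *v v = \<mu> *s v"
  let ?Z = "brk X Y"
  have Zv: "?Z *v v = (X - mat \<mu>) *v (Y *v v)"
    by (simp add: brk_mult_vec Xv vec.scale matrix_vector_mult_diff_rdistrib mat_mult_vec)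
  have "(X - mat \<mu>) *v (?Z *v v) = brk X ?Z *v v"
    by (simp add: brk_mult_vec Xv vec.scale matrix_vector_mult_diff_rdistrib mat_mult_vec)
  hence "iter_mv (X - mat \<mu>) 2 (Y *v v) = 0" using XXY Zv by (simp add: numeral_2_eq_2)
  hence "X *v (Y *v v) = \<mu> *s (Y *v v)" by (rule diagonalizable_eigen_if_iter_mv[OF X])
  thus "?Z *v v = 0 *v v" using Zv by (simp add: matrix_vector_mult_diff_rdistrib mat_mult_vec)
qed

section \<open>Matrices over the algebraic closure\<close>

locale alg_closure =
  fixes emb :: "'f::field_char_0 \<Rightarrow> 'k::field"
  assumes is_alg_closure: "is_alg_closure emb"
begin

lemma emb_0 [simp]: "emb 0 = 0" and emb_1 [simp]: "emb 1 = 1"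
  and emb_add [simp]: "emb (x + y) = emb x + emb y"
  and emb_mult [simp]: "emb (x * y) = emb x * emb y"
  using is_alg_closure by (auto simp: is_alg_closure_def)

lemma alg_closed: "degree (p :: 'k poly) > 0 \<Longrightarrow> \<exists>x. poly p x = 0"
  using is_alg_closure by (auto simp: is_alg_closure_def)

lemma emb_uminus [simp]: "emb (- x) = - emb x"
  by (metis add.left_inverse emb_0 emb_add eq_neg_iff_add_eq_0)

lemma emb_diff [simp]: "emb (x - y) = emb x - emb y"
  by (metis emb_add emb_uminus diff_conv_add_uminus)

lemma emb_eq_0_iff [simp]: "emb x = 0 \<longleftrightarrow> x = 0"
  by (metis emb_0 emb_1 emb_mult mult_zero_left right_inverse zero_neq_one)

lemma emb_sum [simp]: "emb (sum f S) = (\<Sum>i\<in>S. emb (f i))"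
  by (induction S rule: infinite_finite_induct) auto

lemma emb_eq_iff [simp]: "emb x = emb y \<longleftrightarrow> x = y"
  by (metis emb_diff emb_eq_0_iff eq_iff_diff_eq_0)

lemma emb_of_nat [simp]: "emb (of_nat m) = of_nat m"
  by (induction m) auto

lemma closure_of_nat_eq_0_iff: "(of_nat m :: 'k) = 0 \<longleftrightarrow> m = 0"
  by (metis emb_of_nat emb_eq_0_iff of_nat_eq_0_iff)

abbreviation lift :: "('f,'n::finite) sqm \<Rightarrow> ('k,'n) sqm" where
  "lift A \<equiv> map_mat emb A"

lemma lift_component [simp]: "lift A $ i $ j = emb (A $ i $ j)"
  by (simp add: map_mat_def)

lemma lift_add [simp]: "lift (A + B) = lift A + lift B"
  and lift_diff [simp]: "lift (A - B) = lift A - lift B"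
  and lift_0 [simp]: "lift 0 = 0"
  and lift_mat_1 [simp]: "lift (mat 1) = mat 1"
  and lift_smat [simp]: "lift (smat c A) = smat (emb c) (lift A)"
  by (simp_all add: vec_eq_iff mat_def)

lemma lift_mult [simp]: "lift (A ** B) = lift A ** lift B"
  by (simp add: vec_eq_iff matrix_matrix_mult_def)

lemma lift_brk [simp]: "lift (brk A B) = brk (lift A) (lift B)"
  by (simp add: brk_def)

lemma lift_eq_iff [simp]: "lift A = lift B \<longleftrightarrow> A = B"
  by (auto simp: vec_eq_iff)

lemma lift_eq_0_iff [simp]: "lift A = 0 \<longleftrightarrow> A = 0"
  by (metis lift_0 lift_eq_iff)

lemma nilpotent_mat_lift [simp]: "nilpotent_mat (lift A) \<longleftrightarrow> nilpotent_mat A"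
proof -
  have "lift (((\<lambda>M. A ** M) ^^ k) (mat 1)) = ((\<lambda>M. lift A ** M) ^^ k) (mat 1)" for k
    by (induction k) simp_all
  thus ?thesis unfolding nilpotent_mat_def by (metis lift_eq_0_iff)
qed

lemma semisimple_mat_iff_diagonalizable: "semisimple_mat emb A \<longleftrightarrow> diagonalizable (lift A)"
  by (simp add: semisimple_mat_def diagonalizable_def)

lemma semisimple_brk_brk_eq_0:
  "semisimple_mat emb x \<Longrightarrow> brk x (brk x y) = 0 \<Longrightarrow> brk x y = 0"
  using diagonalizable_brk_brk_eq_0[of "lift x" "lift y"]
  by (simp add: semisimple_mat_iff_diagonalizable flip: lift_brk)

end

section \<open>The Fitting decomposition with respect to the Cartan subalgebra\<close>

lemma Brk_subspace: "gl.subspace (Brk A B)"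
  by (simp add: Brk_def)

lemma brk_in_Brk: "a \<in> A \<Longrightarrow> b \<in> B \<Longrightarrow> brk a b \<in> Brk A B"
  unfolding Brk_def by (rule gl.span_base) blast

lemma Brk_subset: "lie_subalg L \<Longrightarrow> Brk L L \<subseteq> L"
  unfolding Brk_def lie_subalg_def by (rule gl.span_minimal) auto

lemma subspace_fitting_one: "gl.subspace (fitting_one h s)"
  unfolding fitting_one_def
proof (rule gl.subspace_Inter, safe)
  fix i :: nat assume "0 < i"
  then obtain j where "i = Suc j" using gr0_implies_Suc by blast
  thus "gl.subspace (iter_brk h i s)" by (simp add: Brk_subspace)
qed

lemma fitting_one_subset_Brk: "fitting_one h s \<subseteq> Brk h s"
proof -
  have "fitting_one h s \<subseteq> iter_brk h 1 s" unfolding fitting_one_def by auto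
  thus ?thesis by simp
qed

lemma centralizer_span:
  assumes "a \<in> centralizer s X" "d \<subseteq> gl.span X"
  shows "a \<in> centralizer s d"
proof -
  have sub: "gl.subspace {y. brk a y = 0}"
    by (rule gl.subspaceI) (simp_all add: brk_add_right brk_smat_right)
  have "X \<subseteq> {y. brk a y = 0}" using assms(1) by (auto simp: centralizer_def)
  hence "gl.span X \<subseteq> {y. brk a y = 0}" by (rule gl.span_minimal[OF _ sub])
  thus ?thesis using assms by (auto simp: centralizer_def)
qed

text \<open>\<open>T\<close> is injective on \<open>T ` S\<close>, so a dimension count applies.\<close>

lemma linear_image_image_eq:
  fixes T :: "('a::field,'n::finite) sqm \<Rightarrow> ('a,'n) sqm"
  assumes S: "gl.subspace S" and lin: "Vector_Spaces.linear smat smat T"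
    and TS: "T ` S \<subseteq> S" and ker: "\<And>w. w \<in> S \<Longrightarrow> T (T w) = 0 \<Longrightarrow> T w = 0"
  shows "T ` T ` S = T ` S"
proof -
  have sub: "gl.subspace (T ` S)" by (rule gl.linear_subspace_image[OF lin S])
  have sub2: "gl.subspace (T ` T ` S)" by (rule gl.linear_subspace_image[OF lin sub])
  have "inj_on T (gl.span (T ` S))"
    unfolding gl.span_eq_iff[THEN iffD2, OF sub]
    using gl.linear_inj_on_iff_eq_0[OF lin sub] ker by auto
  hence "gl.dim (T ` T ` S) = gl.dim (T ` S)"
    by (rule gl.dim_image_eq[OF lin])
  moreover have "T ` T ` S \<subseteq> T ` S" using TS by auto
  ultimately show ?thesis using gl.subspace_dim_equal[OF sub2 sub] by simp
qed

context alg_closure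
begin

lemma brk_image_image_eq:
  assumes sub: "lie_subalg s" and xs: "x \<in> s" and ss: "semisimple_mat emb x"
  shows "brk x ` brk x ` s = brk x ` s"
proof (rule linear_image_image_eq[OF _ linear_brk])
  show "gl.subspace s" using sub by (simp add: lie_subalg_def)
  show "brk x ` s \<subseteq> s" using sub xs by (auto simp: lie_subalg_def)
  show "brk x (brk x w) = 0 \<Longrightarrow> brk x w = 0" for w by (rule semisimple_brk_brk_eq_0[OF ss])
qed

lemma brk_image_subset_fitting_one:
  assumes sub: "lie_subalg s" and hs: "h \<subseteq> s" and xh: "x \<in> h"
    and ss: "semisimple_mat emb x"
  shows "brk x ` s \<subseteq> fitting_one h s"
proof -
  have xs: "x \<in> s" using xh hs by auto
  have "brk x ` s \<subseteq> iter_brk h i s" for i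
  proof (induction i)
    case 0
    show ?case using sub xs by (auto simp: lie_subalg_def)
  next
    case (Suc i)
    have "brk x ` s = brk x ` brk x ` s" using brk_image_image_eq[OF sub xs ss] by simp
    also have "\<dots> \<subseteq> brk x ` iter_brk h i s" using Suc by auto
    also have "\<dots> \<subseteq> iter_brk h (Suc i) s" using brk_in_Brk[OF xh] by auto
    finally show ?case .
  qed
  thus ?thesis unfolding fitting_one_def by auto
qed

text \<open>\<open>ad x\<close> maps its image onto itself, so \<open>brk x a = brk x (brk x w)\<close> for some \<open>w\<close>; the
  corrected element still commutes with \<open>X\<close> because \<open>ad x\<close> commutes with \<open>ad y\<close> for \<open>y \<in> X\<close>
  and is injective on its image.\<close>

lemma centralizer_insert_correction:
  assumes sub: "lie_subalg s" and xs: "x \<in> s" and ss: "semisimple_mat emb x"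
    and comm: "\<forall>y\<in>X. brk x y = 0" and a: "a \<in> centralizer s X"
  obtains w where "w \<in> s" "a - brk x w \<in> centralizer s (insert x X)"
proof -
  have ssub: "gl.subspace s" using sub by (simp add: lie_subalg_def)
  have as: "a \<in> s" using a by (auto simp: centralizer_def)
  have "brk x a \<in> brk x ` brk x ` s" using brk_image_image_eq[OF sub xs ss] as by auto
  then obtain w where ws: "w \<in> s" and w: "brk x a = brk x (brk x w)" by auto
  define a' where "a' = a - brk x w"
  have xa': "brk x a' = 0" by (simp add: a'_def brk_diff_right w)
  have a's: "a' \<in> s"
    unfolding a'_def using sub xs ws by (intro gl.subspace_diff[OF ssub as]) (simp add: lie_subalg_def)
  have "brk y a' = 0" if yX: "y \<in> X" for y
  proof -
    have xy: "brk x y = 0" using comm yX by auto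
    have ya: "brk y a = 0" using a yX by (auto simp: centralizer_def brk_antisym[of y a])
    have q: "brk y a' = brk x (- brk y w)"
      using brk_commute_brk[OF xy, of w] brk_smat_right[of x "-1" "brk y w"]
      by (simp add: a'_def brk_diff_right ya vec_eq_iff)
    have "brk x (brk x (- brk y w)) = 0"
      using brk_commute_brk[OF xy, of a'] xa' q by simp
    hence "brk x (- brk y w) = 0" by (rule semisimple_brk_brk_eq_0[OF ss])
    thus ?thesis using q by simp
  qed
  hence "a' \<in> centralizer s (insert x X)"
    using a's xa' by (auto simp: centralizer_def brk_antisym[of a'])
  with ws show ?thesis unfolding a'_def by (rule that)
qed

lemma exists_centralizer_mod_fitting_one:
  assumes sub: "lie_subalg s" and hs: "h \<subseteq> s" and fin: "finite X" and Xh: "X \<subseteq> h"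
    and ss: "\<forall>x\<in>X. semisimple_mat emb x" and comm: "\<forall>x\<in>X. \<forall>y\<in>X. brk x y = 0"
    and v: "v \<in> s"
  shows "\<exists>a\<in>centralizer s X. v - a \<in> fitting_one h s"
  using fin Xh ss comm
proof (induction X rule: finite_induct)
  case empty
  have "v - v \<in> fitting_one h s" using gl.subspace_0[OF subspace_fitting_one] by simp
  moreover have "v \<in> centralizer s {}" using v by (simp add: centralizer_def)
  ultimately show ?case by blast
next
  case (insert x X)
  obtain a where a: "a \<in> centralizer s X" and va: "v - a \<in> fitting_one h s"
    using insert.IH insert.prems by auto
  have xh: "x \<in> h" and xs: "x \<in> s" using insert.prems hs by auto
  obtain w where ws: "w \<in> s" and a': "a - brk x w \<in> centralizer s (insert x X)"
    using centralizer_insert_correction[OF sub xs _ _ a] insert.prems by auto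
  have "brk x w \<in> fitting_one h s"
    using brk_image_subset_fitting_one[OF sub hs xh] insert.prems ws by auto
  hence "(v - a) + brk x w \<in> fitting_one h s"
    by (rule gl.subspace_add[OF subspace_fitting_one va])
  hence "v - (a - brk x w) \<in> fitting_one h s" by (simp add: algebra_simps)
  thus ?case using a' by blast
qed

lemma centralizer_plus_fitting_one:
  assumes sub: "lie_subalg s" and ds: "d \<subseteq> s" and ss: "\<forall>x\<in>d. semisimple_mat emb x"
    and comm: "\<forall>x\<in>d. \<forall>y\<in>d. brk x y = 0" and h: "h = centralizer s d" and v: "v \<in> s"
  shows "\<exists>a\<in>h. v - a \<in> fitting_one h s"
proof -
  obtain X where Xd: "X \<subseteq> d" and ind: "gl.independent X" and dX: "d \<subseteq> gl.span X"
    using gl.basis_exists[of d] by metis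
  have hs: "h \<subseteq> s" and dh: "d \<subseteq> h" using h ds comm by (auto simp: centralizer_def)
  obtain a where a: "a \<in> centralizer s X" and va: "v - a \<in> fitting_one h s"
    using exists_centralizer_mod_fitting_one[OF sub hs gl.finiteI_independent[OF ind] _ _ _ v]
      Xd dh ss comm by blast
  have "a \<in> h" using centralizer_span[OF a dX] h by simp
  thus ?thesis using va by blast
qed

end

section \<open>Lie's theorem\<close>

lemma span_image_lessThan_sum:
  fixes f :: "nat \<Rightarrow> 'a::field^'n::finite"
  shows "y \<in> vec.span (f ` {..<k}) \<Longrightarrow> \<exists>c. y = (\<Sum>i<k. c i *s f i)"
proof (induction k arbitrary: y)
  case (Suc k)
  obtain a where "y - a *s f k \<in> vec.span (f ` {..<k})"
    using Suc.prems by (auto simp: lessThan_Suc vec.span_breakdown_eq)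
  then obtain c where c: "y - a *s f k = (\<Sum>i<k. c i *s f i)" using Suc.IH by blast
  have "(\<Sum>i<k. (c(k := a)) i *s f i) = (\<Sum>i<k. c i *s f i)" by (rule sum.cong) auto
  hence "y = (\<Sum>i<Suc k. (c(k := a)) i *s f i)" using c by (simp add: algebra_simps)
  thus ?case by blast
qed simp

lemma mult_vec_in_if_span:
  fixes M :: "('a::field,'n::finite) sqm"
  assumes "\<forall>x\<in>S. M *v x \<in> W" "vec.subspace W" "x \<in> vec.span S"
  shows "M *v x \<in> W"
proof -
  have "M *v x \<in> vec.span ((*v) M ` S)" using assms(3) by (simp add: vec.span_image)
  also have "\<dots> \<subseteq> W" using assms(1,2) by (intro vec.span_minimal) auto
  finally show ?thesis .
qed

definition krylov :: "('a::field,'n::finite) sqm \<Rightarrow> 'a^'n \<Rightarrow> ('a^'n) set \<Rightarrow> nat \<Rightarrow> ('a^'n) set" where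
  "krylov X v U k = vec.span (U \<union> (\<lambda>i. iter_mv X i v) ` {..<k})"

lemma dim_krylov_ge:
  assumes "\<forall>j<k. iter_mv X j v \<notin> krylov X v U j"
  shows "vec.dim (krylov X v U k) \<ge> k"
  using assms
proof (induction k)
  case (Suc k)
  have e: "U \<union> (\<lambda>i. iter_mv X i v) ` {..<Suc k}
      = insert (iter_mv X k v) (U \<union> (\<lambda>i. iter_mv X i v) ` {..<k})"
    by (auto simp: lessThan_Suc)
  have "iter_mv X k v \<notin> vec.span (U \<union> (\<lambda>i. iter_mv X i v) ` {..<k})"
    using Suc.prems by (simp add: krylov_def)
  hence "vec.dim (krylov X v U (Suc k)) = vec.dim (krylov X v U k) + 1"
    unfolding krylov_def vec.dim_span e by (simp add: vec.dim_insert)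
  thus ?case using Suc by simp
qed simp

lemma krylov_stops: "\<exists>m. iter_mv X m v \<in> krylov X v U m"
  for X :: "('a::field,'n::finite) sqm"
proof (rule ccontr)
  assume "\<not> ?thesis"
  hence "vec.dim (krylov X v U (Suc CARD('n))) \<ge> Suc CARD('n)"
    by (intro dim_krylov_ge) auto
  moreover have "vec.dim (krylov X v U (Suc CARD('n))) \<le> CARD('n)"
    using vec.dim_subset_UNIV[of "krylov X v U (Suc CARD('n))"]
    by (simp add: vec.dimension_def card_cart_basis)
  ultimately show False by simp
qed

definition poly_mv :: "'a::field poly \<Rightarrow> ('a,'n::finite) sqm \<Rightarrow> 'a^'n \<Rightarrow> 'a^'n" where
  "poly_mv p T w = (\<Sum>i\<le>degree p. coeff p i *s iter_mv T i w)"

lemma poly_mv_lessThan: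
  assumes "degree p < N"
  shows "poly_mv p T w = (\<Sum>i<N. coeff p i *s iter_mv T i w)"
  unfolding poly_mv_def
  by (rule sum.mono_neutral_left) (use assms in \<open>auto simp: coeff_eq_0\<close>)

lemma poly_mv_add: "poly_mv (p + q) T w = poly_mv p T w + poly_mv q T w"
proof -
  let ?N = "Suc (max (degree p) (degree q))"
  have "degree (p + q) < ?N" using degree_add_le_max[of p q] by simp
  thus ?thesis
    by (simp add: poly_mv_lessThan[of _ ?N] vector_sadd_rdistrib sum.distrib)
qed

lemma poly_mv_diff: "poly_mv (p - q) T w = poly_mv p T w - poly_mv q T w"
  using poly_mv_add[of "p - q" q T w] by (simp add: eq_diff_eq)

lemma poly_mv_0 [simp]: "poly_mv 0 T w = 0"
  by (simp add: poly_mv_def)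

lemma poly_mv_sum: "poly_mv (\<Sum>j\<in>S. P j) T w = (\<Sum>j\<in>S. poly_mv (P j) T w)"
  by (induction S rule: infinite_finite_induct) (simp_all add: poly_mv_add)

lemma poly_mv_monom: "poly_mv (monom a i) T w = a *s iter_mv T i w"
proof (cases "a = 0")
  case False
  have "poly_mv (monom a i) T w = (\<Sum>j\<le>i. (if i = j then a else 0) *s iter_mv T j w)"
    by (simp add: poly_mv_def degree_monom_eq[OF False])
  also have "\<dots> = (\<Sum>j\<le>i. if i = j then a *s iter_mv T j w else 0)"
    by (rule sum.cong) auto
  finally show ?thesis by simp
qed simp

lemma poly_mv_linear_factor:
  "poly_mv ([:-c, 1:] * q) T w = T *v poly_mv q T w - c *s poly_mv q T w"
proof -
  let ?N = "Suc (Suc (degree q))"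
  have d: "degree (pCons 0 q) < ?N" using degree_pCons_le[of 0 q] by simp
  have "poly_mv (pCons 0 q) T w = (\<Sum>i<Suc (degree q). coeff q i *s iter_mv T (Suc i) w)"
    unfolding poly_mv_lessThan[OF d] sum.lessThan_Suc_shift by simp
  also have "\<dots> = T *v poly_mv q T w"
    by (simp add: poly_mv_def lessThan_Suc_atMost vec.sum vec.scale)
  finally have shift: "poly_mv (pCons 0 q) T w = T *v poly_mv q T w" .
  have smult: "poly_mv (smult a q) T w = a *s poly_mv q T w" for a
    using degree_smult_le[of a q]
    by (simp add: poly_mv_lessThan[of _ "Suc (degree q)"] vec.scale_sum_right)
  have "[:-c, 1:] * q = smult (-c) q + pCons 0 q" by simp
  thus ?thesis by (simp only: poly_mv_add smult shift) (simp add: vec.scale_minus_left)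
qed

lemma poly_mv_in_invariant:
  assumes "vec.subspace W" "w \<in> W" "\<forall>x\<in>W. T *v x \<in> W"
  shows "poly_mv p T w \<in> W"
proof -
  have "iter_mv T i w \<in> W" for i using assms by (induction i) auto
  thus ?thesis unfolding poly_mv_def using assms(1)
    by (intro vec.subspace_sum vec.subspace_scale) auto
qed

context alg_closure
begin

text \<open>Peel off linear factors of an annihilating polynomial until one of them kills a vector
  modulo \<open>U\<close>.\<close>

lemma eigenvector_mod_if_poly_mv:
  fixes T :: "('k,'n::finite) sqm"
  assumes U: "vec.subspace U" and W: "vec.subspace W" and TW: "\<forall>x\<in>W. T *v x \<in> W"
  shows "p \<noteq> 0 \<Longrightarrow> w \<in> W \<Longrightarrow> w \<notin> U \<Longrightarrow> poly_mv p T w \<in> U \<Longrightarrow>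
    \<exists>w'\<in>W. w' \<notin> U \<and> (\<exists>c. T *v w' - c *s w' \<in> U)"
proof (induction "degree p" arbitrary: p rule: less_induct)
  case less
  show ?case
  proof (cases "degree p = 0")
    case True
    have a: "coeff p 0 \<noteq> 0" using less.prems(1) True by (metis leading_coeff_0_iff)
    have "coeff p 0 *s w \<in> U" using less.prems(4) True by (simp add: poly_mv_def)
    hence "inverse (coeff p 0) *s (coeff p 0 *s w) \<in> U" by (rule vec.subspace_scale[OF U])
    hence "w \<in> U" using a by simp
    thus ?thesis using less.prems(3) by simp
  next
    case False
    then obtain c where "poly p c = 0" using alg_closed by blast
    then obtain q where pq: "p = [:-c, 1:] * q" using poly_eq_0_iff_dvd by (metis dvdE)
    have q0: "q \<noteq> 0" using less.prems(1) pq by auto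
    have dq: "degree q < degree p" unfolding pq using q0 by (subst degree_mult_eq) auto
    have qW: "poly_mv q T w \<in> W" by (rule poly_mv_in_invariant[OF W less.prems(2) TW])
    show ?thesis
    proof (cases "poly_mv q T w \<in> U")
      case True
      show ?thesis by (rule less.hyps[OF dq q0 less.prems(2,3) True])
    next
      case False
      have "T *v poly_mv q T w - c *s poly_mv q T w \<in> U"
        using less.prems(4) unfolding pq poly_mv_linear_factor .
      thus ?thesis using qW False by blast
    qed
  qed
qed

lemma eigenvector_mod:
  fixes T :: "('k,'n::finite) sqm"
  assumes U: "vec.subspace U" and W: "vec.subspace W" and TW: "\<forall>x\<in>W. T *v x \<in> W"
    and w0: "w0 \<in> W" "w0 \<notin> U"
  shows "\<exists>w\<in>W. w \<notin> U \<and> (\<exists>c. T *v w - c *s w \<in> U)"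
proof -
  obtain m where "iter_mv T m w0 \<in> krylov T w0 U m" using krylov_stops by blast
  then obtain u y where u: "u \<in> vec.span U" and y: "y \<in> vec.span ((\<lambda>i. iter_mv T i w0) ` {..<m})"
    and e: "iter_mv T m w0 = u + y"
    unfolding krylov_def vec.span_Un by blast
  obtain c where yc: "y = (\<Sum>i<m. c i *s iter_mv T i w0)" using span_image_lessThan_sum[OF y] by blast
  define p where "p = monom 1 m - (\<Sum>i<m. monom (c i) i)"
  have "coeff p m = 1" by (simp add: p_def coeff_sum)
  hence p0: "p \<noteq> 0" by auto
  have "poly_mv p T w0 = u"
    using e by (simp add: p_def poly_mv_diff poly_mv_sum poly_mv_monom yc)
  hence "poly_mv p T w0 \<in> U" using u vec.span_eq_iff[THEN iffD2, OF U] by simp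
  thus ?thesis using eigenvector_mod_if_poly_mv[OF U W TW p0 w0] by blast
qed

end

text \<open>Lie's invariance lemma, without forming quotients: the vectors \<open>orbit 0, \<dots>, orbit (len - 1)\<close>
  form a basis of \<open>Kr len\<close> modulo \<open>U\<close>, and \<open>entry M i j\<close> are the coordinates of
  \<open>M *v orbit j\<close> in it. Every \<open>Y \<in> Ys\<close> acts by a triangular matrix with diagonal \<open>eigval Y\<close>
  (lemma \<open>triangular\<close>), so the trace \<open>len * eigval (brk X Y)\<close> of the commutator \<open>brk X Y\<close>
  vanishes.\<close>

locale lie_invariance =
  fixes X :: "('a::field,'n::finite) sqm" and Ys :: "('a,'n) sqm set"
    and U :: "('a^'n) set" and v0 :: "'a^'n"
  assumes subspace_U: "vec.subspace U" and v0_notin_U: "v0 \<notin> U"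
    and X_U: "\<forall>u\<in>U. X *v u \<in> U" and Ys_U: "\<forall>Y\<in>Ys. \<forall>u\<in>U. Y *v u \<in> U"
    and brk_X_Ys: "\<forall>Y\<in>Ys. brk X Y \<in> Ys"
    and eigen: "\<forall>Y\<in>Ys. \<exists>c. Y *v v0 - c *s v0 \<in> U"
    and char_0: "\<And>k. k > 0 \<Longrightarrow> (of_nat k :: 'a) \<noteq> 0"
begin

abbreviation orbit :: "nat \<Rightarrow> 'a^'n" where
  "orbit i \<equiv> iter_mv X i v0"

abbreviation Kr :: "nat \<Rightarrow> ('a^'n) set" where
  "Kr k \<equiv> krylov X v0 U k"

definition eigval :: "('a,'n) sqm \<Rightarrow> 'a" where
  "eigval Y = (SOME c. Y *v v0 - c *s v0 \<in> U)"

definition len :: nat where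
  "len = (LEAST m. orbit m \<in> Kr m)"

lemma eigval: "Y \<in> Ys \<Longrightarrow> Y *v v0 - eigval Y *s v0 \<in> U"
  unfolding eigval_def by (rule someI_ex) (use eigen in blast)

lemma subspace_Kr: "vec.subspace (Kr k)" by (simp add: krylov_def)

lemma U_subset_Kr: "U \<subseteq> Kr k" unfolding krylov_def using vec.span_superset by blast

lemma orbit_in_Kr: "i < k \<Longrightarrow> orbit i \<in> Kr k" unfolding krylov_def by (rule vec.span_base) auto

lemma Kr_mono: "j \<le> k \<Longrightarrow> Kr j \<subseteq> Kr k" unfolding krylov_def by (rule vec.span_mono) auto

lemma orbit_len_in_Kr: "orbit len \<in> Kr len" unfolding len_def by (rule LeastI_ex) (rule krylov_stops)

lemma orbit_notin_Kr: "j < len \<Longrightarrow> orbit j \<notin> Kr j" unfolding len_def by (rule not_less_Least)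

lemma Kr_0: "Kr 0 = U" unfolding krylov_def using subspace_U by simp

lemma len_pos: "len > 0"
proof (rule ccontr)
  assume "\<not> len > 0"
  hence "len = 0" by simp
  hence "v0 \<in> Kr 0" using orbit_len_in_Kr by simp
  thus False using v0_notin_U Kr_0 by simp
qed

lemma Kr_invariantI:
  assumes "\<forall>u\<in>U. M *v u \<in> Kr k'" "\<forall>i<k. M *v orbit i \<in> Kr k'" "u \<in> Kr k"
  shows "M *v u \<in> Kr k'"
  using assms(3) unfolding krylov_def[of X v0 U k]
  by (rule mult_vec_in_if_span[OF _ subspace_Kr, rotated]) (use assms(1,2) in auto)

lemma X_Kr_Suc: "u \<in> Kr k \<Longrightarrow> X *v u \<in> Kr (Suc k)"
proof (rule Kr_invariantI)
  have "X *v orbit i \<in> Kr (Suc k)" if "i < k" for i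
    using orbit_in_Kr[of "Suc i" "Suc k"] that by simp
  thus "\<forall>i<k. X *v orbit i \<in> Kr (Suc k)" by blast
qed (use X_U U_subset_Kr in auto)

lemma triangular: "Y \<in> Ys \<Longrightarrow> Y *v orbit k - eigval Y *s orbit k \<in> Kr k"
proof (induction k arbitrary: Y)
  case 0
  thus ?case using eigval U_subset_Kr by auto
next
  case (Suc k)
  let ?Z = "brk X Y"
  have Z: "?Z \<in> Ys" using brk_X_Ys Suc.prems by blast
  let ?r = "Y *v orbit k - eigval Y *s orbit k" and ?r' = "?Z *v orbit k - eigval ?Z *s orbit k"
  have r: "?r \<in> Kr k" by (rule Suc.IH[OF Suc.prems])
  have r': "?r' \<in> Kr k" by (rule Suc.IH[OF Z])
  have eq: "Y *v orbit (Suc k) - eigval Y *s orbit (Suc k) = X *v ?r - ?r' - eigval ?Z *s orbit k"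
    by (simp add: brk_mult_vec matrix_vector_mult_diff_distrib vec.scale)
  have "X *v ?r \<in> Kr (Suc k)" by (rule X_Kr_Suc[OF r])
  moreover have "?r' \<in> Kr (Suc k)" using r' Kr_mono[of k "Suc k"] by auto
  moreover have "eigval ?Z *s orbit k \<in> Kr (Suc k)" by (rule vec.subspace_scale[OF subspace_Kr orbit_in_Kr]) simp
  ultimately show ?case unfolding eq
    by (intro vec.subspace_diff[OF subspace_Kr, of "X *v ?r - ?r'"] vec.subspace_diff[OF subspace_Kr, of "X *v ?r"])
qed

lemma X_Kr_len: "u \<in> Kr len \<Longrightarrow> X *v u \<in> Kr len"
proof (rule Kr_invariantI)
  show "\<forall>i<len. X *v orbit i \<in> Kr len"
    using orbit_in_Kr orbit_len_in_Kr by (metis Suc_lessI funpow.simps(2) o_apply)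
qed (use X_U U_subset_Kr in auto)

lemma Y_Kr_len: "Y \<in> Ys \<Longrightarrow> u \<in> Kr len \<Longrightarrow> Y *v u \<in> Kr len"
proof (rule Kr_invariantI)
  assume Y: "Y \<in> Ys"
  show "\<forall>u\<in>U. Y *v u \<in> Kr len" using Y Ys_U U_subset_Kr by blast
  show "\<forall>i<len. Y *v orbit i \<in> Kr len"
  proof (intro allI impI)
    fix i assume i: "i < len"
    have "Y *v orbit i - eigval Y *s orbit i \<in> Kr len"
      using triangular[OF Y, of i] Kr_mono[of i len] i by auto
    moreover have "eigval Y *s orbit i \<in> Kr len"
      by (rule vec.subspace_scale[OF subspace_Kr orbit_in_Kr[OF i]])
    ultimately show "Y *v orbit i \<in> Kr len"
      using vec.subspace_add[OF subspace_Kr] by fastforce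
  qed
qed

lemma Kr_coords: "w \<in> Kr k \<Longrightarrow> \<exists>c. w - (\<Sum>i<k. c i *s orbit i) \<in> U"
proof -
  assume "w \<in> Kr k"
  then obtain a b where a: "a \<in> vec.span U" and b: "b \<in> vec.span ((\<lambda>i. orbit i) ` {..<k})"
    and w: "w = a + b"
    unfolding krylov_def vec.span_Un by blast
  obtain c where bc: "b = (\<Sum>i<k. c i *s orbit i)" using span_image_lessThan_sum[OF b] by blast
  have "w - (\<Sum>i<k. c i *s orbit i) = a" using w bc by simp
  thus ?thesis using a vec.span_eq_iff[THEN iffD2, OF subspace_U] by auto
qed

lemma sum_orbit_in_Kr: "(\<Sum>i<k. c i *s orbit i) \<in> Kr k"
  by (intro vec.subspace_sum[OF subspace_Kr] vec.subspace_scale[OF subspace_Kr] orbit_in_Kr) auto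

lemma orbit_independent_mod_U: "k \<le> len \<Longrightarrow> (\<Sum>i<k. c i *s orbit i) \<in> U \<Longrightarrow> i < k \<Longrightarrow> c i = 0"
proof (induction k arbitrary: i)
  case 0 thus ?case by simp
next
  case (Suc k)
  have S: "(\<Sum>i<k. c i *s orbit i) + c k *s orbit k \<in> U" using Suc.prems(2) by simp
  have ck: "c k = 0"
  proof (rule ccontr)
    assume ck: "c k \<noteq> 0"
    have ee: "orbit k = inverse (c k) *s (((\<Sum>i<k. c i *s orbit i) + c k *s orbit k) - (\<Sum>i<k. c i *s orbit i))"
      using ck by simp
    have "((\<Sum>i<k. c i *s orbit i) + c k *s orbit k) - (\<Sum>i<k. c i *s orbit i) \<in> Kr k"
      using S U_subset_Kr sum_orbit_in_Kr by (intro vec.subspace_diff[OF subspace_Kr]) auto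
    hence "inverse (c k) *s (((\<Sum>i<k. c i *s orbit i) + c k *s orbit k) - (\<Sum>i<k. c i *s orbit i)) \<in> Kr k"
      by (rule vec.subspace_scale[OF subspace_Kr])
    hence "orbit k \<in> Kr k" by (simp only: ee[symmetric])
    thus False using orbit_notin_Kr[of k] Suc.prems(1) by simp
  qed
  have S': "(\<Sum>i<k. c i *s orbit i) \<in> U" using S ck by simp
  show ?case
  proof (cases "i = k")
    case True thus ?thesis using ck by simp
  next
    case False
    thus ?thesis using Suc.IH[OF _ S'] Suc.prems by simp
  qed
qed

lemma coords_unique:
  assumes "w - (\<Sum>i<len. c i *s orbit i) \<in> U" "w - (\<Sum>i<len. d i *s orbit i) \<in> U" "i < len"
  shows "c i = d i"
proof -
  have "(w - (\<Sum>i<len. d i *s orbit i)) - (w - (\<Sum>i<len. c i *s orbit i)) \<in> U"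
    by (rule vec.subspace_diff[OF subspace_U assms(2,1)])
  moreover have "(w - (\<Sum>i<len. d i *s orbit i)) - (w - (\<Sum>i<len. c i *s orbit i)) = (\<Sum>i<len. (c i - d i) *s orbit i)"
    by (simp add: vector_sub_rdistrib sum_subtractf)
  ultimately have "(\<Sum>i<len. (c i - d i) *s orbit i) \<in> U" by simp
  hence "c i - d i = 0" by (rule orbit_independent_mod_U[OF order.refl _ assms(3)])
  thus ?thesis by simp
qed

definition coord :: "'a^'n \<Rightarrow> nat \<Rightarrow> 'a" where
  "coord w = (SOME c. w - (\<Sum>i<len. c i *s orbit i) \<in> U)"

lemma coord: "w \<in> Kr len \<Longrightarrow> w - (\<Sum>i<len. coord w i *s orbit i) \<in> U"
proof -
  assume w: "w \<in> Kr len"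
  show ?thesis unfolding coord_def
    by (rule someI_ex[where P = "\<lambda>c. w - (\<Sum>i<len. c i *s orbit i) \<in> U"]) (rule Kr_coords[OF w])
qed

lemma coord_eqI: "w \<in> Kr len \<Longrightarrow> w - (\<Sum>i<len. c i *s orbit i) \<in> U \<Longrightarrow> i < len \<Longrightarrow> coord w i = c i"
proof -
  assume w: "w \<in> Kr len" and c: "w - (\<Sum>i<len. c i *s orbit i) \<in> U" and i: "i < len"
  show ?thesis by (rule coords_unique[OF coord[OF w] c i])
qed

definition entry :: "('a,'n) sqm \<Rightarrow> nat \<Rightarrow> nat \<Rightarrow> 'a" where
  "entry M i j = coord (M *v orbit j) i"

lemma entry: "(\<forall>u\<in>Kr len. M *v u \<in> Kr len) \<Longrightarrow> j < len \<Longrightarrow> M *v orbit j - (\<Sum>i<len. entry M i j *s orbit i) \<in> U"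
  unfolding entry_def by (rule coord) (use orbit_in_Kr in blast)

lemma entry_mult:
  assumes P1: "\<forall>u\<in>Kr len. M1 *v u \<in> Kr len" and U1: "\<forall>u\<in>U. M1 *v u \<in> U"
    and P2: "\<forall>u\<in>Kr len. M2 *v u \<in> Kr len" and i: "i < len" and j: "j < len"
  shows "entry (M1 ** M2) i j = (\<Sum>k<len. entry M1 i k * entry M2 k j)"
proof -
  define a where "a k = entry M2 k j" for k
  define b where "b i k = entry M1 i k" for i k
  define u2 where "u2 = M2 *v orbit j - (\<Sum>k<len. a k *s orbit k)"
  define u1 where "u1 k = M1 *v orbit k - (\<Sum>i<len. b i k *s orbit i)" for k
  have u2U: "u2 \<in> U" unfolding u2_def a_def by (rule entry[OF P2 j])
  have u1U: "k < len \<Longrightarrow> u1 k \<in> U" for k unfolding u1_def b_def by (rule entry[OF P1])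
  have 1: "M1 *v (\<Sum>k<len. a k *s orbit k) = (\<Sum>k<len. a k *s (M1 *v orbit k))"
    by (simp add: vec.sum vec.scale)
  have 2: "(\<Sum>k<len. a k *s (\<Sum>i<len. b i k *s orbit i)) = (\<Sum>i<len. (\<Sum>k<len. b i k * a k) *s orbit i)"
  proof -
    have "(\<Sum>k<len. a k *s (\<Sum>i<len. b i k *s orbit i)) = (\<Sum>k<len. \<Sum>i<len. (b i k * a k) *s orbit i)"
      by (simp add: vec.scale_sum_right mult.commute)
    also have "\<dots> = (\<Sum>i<len. \<Sum>k<len. (b i k * a k) *s orbit i)" by (rule sum.swap)
    also have "\<dots> = (\<Sum>i<len. (\<Sum>k<len. b i k * a k) *s orbit i)"
      by (simp add: vec.scale_sum_left)
    finally show ?thesis .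
  qed
  have 3: "(\<Sum>k<len. a k *s u1 k) = (\<Sum>k<len. a k *s (M1 *v orbit k)) - (\<Sum>k<len. a k *s (\<Sum>i<len. b i k *s orbit i))"
    unfolding u1_def by (simp add: vec.scale_right_diff_distrib sum_subtractf)
  have 4: "M1 *v u2 = (M1 ** M2) *v orbit j - M1 *v (\<Sum>k<len. a k *s orbit k)"
    unfolding u2_def by (simp add: matrix_vector_mult_diff_distrib matrix_vector_mul_assoc)
  have key: "(M1 ** M2) *v orbit j - (\<Sum>i<len. (\<Sum>k<len. b i k * a k) *s orbit i) = M1 *v u2 + (\<Sum>k<len. a k *s u1 k)"
    unfolding 3 4 1 2 by simp
  have "M1 *v u2 + (\<Sum>k<len. a k *s u1 k) \<in> U"
    using U1 u2U u1U by (intro vec.subspace_add[OF subspace_U] vec.subspace_sum[OF subspace_U] vec.subspace_scale[OF subspace_U]) auto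
  hence mem: "(M1 ** M2) *v orbit j - (\<Sum>i<len. (\<Sum>k<len. b i k * a k) *s orbit i) \<in> U" unfolding key .
  have inK: "(M1 ** M2) *v orbit j \<in> Kr len"
    using P1 P2 orbit_in_Kr[OF j] by (simp add: matrix_vector_mul_assoc[symmetric])
  show ?thesis using coord_eqI[OF inK mem i] by (simp add: entry_def a_def b_def)
qed

lemma entry_diff:
  assumes P1: "\<forall>u\<in>Kr len. M1 *v u \<in> Kr len" and P2: "\<forall>u\<in>Kr len. M2 *v u \<in> Kr len"
    and i: "i < len" and j: "j < len"
  shows "entry (M1 - M2) i j = entry M1 i j - entry M2 i j"
proof -
  have "(M1 *v orbit j - (\<Sum>i<len. entry M1 i j *s orbit i)) - (M2 *v orbit j - (\<Sum>i<len. entry M2 i j *s orbit i)) \<in> U"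
    by (rule vec.subspace_diff[OF subspace_U entry[OF P1 j] entry[OF P2 j]])
  moreover have "(M1 *v orbit j - (\<Sum>i<len. entry M1 i j *s orbit i)) - (M2 *v orbit j - (\<Sum>i<len. entry M2 i j *s orbit i))
     = (M1 - M2) *v orbit j - (\<Sum>i<len. (entry M1 i j - entry M2 i j) *s orbit i)"
    by (simp add: matrix_vector_mult_diff_rdistrib vector_sub_rdistrib sum_subtractf)
  ultimately have mem: "(M1 - M2) *v orbit j - (\<Sum>i<len. (entry M1 i j - entry M2 i j) *s orbit i) \<in> U" by simp
  have inK: "(M1 - M2) *v orbit j \<in> Kr len"
    using P1 P2 orbit_in_Kr[OF j] by (simp add: matrix_vector_mult_diff_rdistrib vec.subspace_diff[OF subspace_Kr])
  show ?thesis using coord_eqI[OF inK mem i] by (simp add: entry_def)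
qed

lemma entry_diag:
  assumes Z: "Z \<in> Ys" and j: "j < len"
  shows "entry Z j j = eigval Z"
proof -
  obtain c where c: "(Z *v orbit j - eigval Z *s orbit j) - (\<Sum>i<j. c i *s orbit i) \<in> U"
    using Kr_coords[OF triangular[OF Z]] by blast
  define c' where "c' i = (if i < j then c i else if i = j then eigval Z else 0)" for i
  have sumeq: "(\<Sum>i<len. c' i *s orbit i) = (\<Sum>i<j. c i *s orbit i) + eigval Z *s orbit j"
  proof -
    have "(\<Sum>i<len. c' i *s orbit i) = (\<Sum>i<Suc j. c' i *s orbit i)"
    proof (rule sum.mono_neutral_right)
      show "{..<Suc j} \<subseteq> {..<len}" using j by auto
      show "\<forall>i\<in>{..<len} - {..<Suc j}. c' i *s orbit i = 0" by (auto simp: c'_def)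
    qed simp
    also have "\<dots> = (\<Sum>i<j. c' i *s orbit i) + c' j *s orbit j" by simp
    also have "(\<Sum>i<j. c' i *s orbit i) = (\<Sum>i<j. c i *s orbit i)"
      by (rule sum.cong) (auto simp: c'_def)
    finally show ?thesis by (simp add: c'_def)
  qed
  have mem: "Z *v orbit j - (\<Sum>i<len. c' i *s orbit i) \<in> U"
    using c unfolding sumeq by (simp add: algebra_simps)
  have inK: "Z *v orbit j \<in> Kr len" by (rule Y_Kr_len[OF Z orbit_in_Kr[OF j]])
  show ?thesis using coord_eqI[OF inK mem j] by (simp add: entry_def c'_def)
qed

theorem brk_mult_v0_in_U:
  assumes Y: "Y \<in> Ys"
  shows "brk X Y *v v0 \<in> U"
proof -
  let ?Z = "brk X Y"
  have Z: "?Z \<in> Ys" using brk_X_Ys Y by blast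
  have PX: "\<forall>u\<in>Kr len. X *v u \<in> Kr len" using X_Kr_len by blast
  have PY: "\<forall>u\<in>Kr len. Y *v u \<in> Kr len" using Y_Kr_len[OF Y] by blast
  have UX: "\<forall>u\<in>U. X *v u \<in> U" by (rule X_U)
  have UY: "\<forall>u\<in>U. Y *v u \<in> U" using Ys_U Y by blast
  have PXY: "\<forall>u\<in>Kr len. (X ** Y) *v u \<in> Kr len" using PX PY by (simp add: matrix_vector_mul_assoc[symmetric])
  have PYX: "\<forall>u\<in>Kr len. (Y ** X) *v u \<in> Kr len" using PX PY by (simp add: matrix_vector_mul_assoc[symmetric])
  have cfZ: "entry ?Z j j = (\<Sum>k<len. entry X j k * entry Y k j) - (\<Sum>k<len. entry Y j k * entry X k j)" if j: "j < len" for j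
    unfolding brk_def entry_diff[OF PXY PYX j j] entry_mult[OF PX UX PY j j] entry_mult[OF PY UY PX j j] ..
  have "(\<Sum>j<len. entry ?Z j j) = (\<Sum>j<len. \<Sum>k<len. entry X j k * entry Y k j) - (\<Sum>j<len. \<Sum>k<len. entry Y j k * entry X k j)"
    by (simp add: cfZ sum_subtractf)
  also have "(\<Sum>j<len. \<Sum>k<len. entry Y j k * entry X k j) = (\<Sum>j<len. \<Sum>k<len. entry X j k * entry Y k j)"
    by (subst sum.swap) (simp add: mult.commute)
  finally have "(\<Sum>j<len. entry ?Z j j) = 0" by simp
  moreover have "(\<Sum>j<len. entry ?Z j j) = of_nat len * eigval ?Z"
    by (simp add: entry_diag[OF Z])
  ultimately have "of_nat len * eigval ?Z = 0" by simp
  hence "eigval ?Z = 0" using char_0[OF len_pos] by simp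
  thus ?thesis using eigval[OF Z] by simp
qed

end

lemma Brk_mono: "A \<subseteq> A' \<Longrightarrow> B \<subseteq> B' \<Longrightarrow> Brk A B \<subseteq> Brk A' B'"
  unfolding Brk_def by (rule gl.span_mono) blast

lemma derived_series_mono: "A \<subseteq> B \<Longrightarrow> derived_series A k \<subseteq> derived_series B k"
  by (induction k) (simp_all add: Brk_mono)

lemma lie_solvable_subspace:
  assumes "lie_solvable L" "I \<subseteq> L" "gl.subspace I"
  shows "lie_solvable I"
proof -
  obtain k where k: "derived_series L k = {0}" using assms(1) by (auto simp: lie_solvable_def)
  have "derived_series I k \<subseteq> {0}" using derived_series_mono[OF assms(2), of k] k by simp
  moreover have "0 \<in> derived_series I k"
    using assms(3) by (cases k) (auto simp: gl.subspace_0 Brk_def gl.span_zero)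
  ultimately show ?thesis by (auto simp: lie_solvable_def)
qed

lemma Brk_self_neq_if_solvable:
  assumes "lie_solvable L" "\<not> L \<subseteq> {0}"
  shows "Brk L L \<noteq> L"
proof
  assume "Brk L L = L"
  hence "derived_series L k = L" for k by (induction k) auto
  thus False using assms by (auto simp: lie_solvable_def)
qed

context finite_dimensional_vector_space
begin

lemma exists_hyperplane_between:
  assumes D: "subspace D" and L: "subspace L" and DL: "D \<subseteq> L" "D \<noteq> L"
  obtains I z where "subspace I" "D \<subseteq> I" "I \<subseteq> L" "z \<in> L" "z \<notin> I" "dim I < dim L"
    "\<And>x. x \<in> L \<Longrightarrow> \<exists>k. x - scale k z \<in> I"
proof -
  obtain BD where BD: "BD \<subseteq> D" "independent BD" "D \<subseteq> span BD"
    using basis_exists[of D] by metis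
  obtain BL where BL: "BD \<subseteq> BL" "BL \<subseteq> L" "independent BL" "L \<subseteq> span BL"
    by (rule maximal_independent_subset_extend[OF order_trans[OF BD(1) DL(1)] BD(2)])
  obtain z where z: "z \<in> BL" "z \<notin> BD"
  proof -
    have "\<not> BL \<subseteq> BD"
    proof
      assume "BL \<subseteq> BD"
      have "L \<subseteq> span BL" by (rule BL(4))
      also have "\<dots> \<subseteq> span BD" using \<open>BL \<subseteq> BD\<close> by (rule span_mono)
      also have "\<dots> \<subseteq> D" by (rule span_minimal[OF BD(1) D])
      finally show False using DL by blast
    qed
    thus ?thesis using that by blast
  qed
  define I where "I = span (BL - {z})"
  have BLz: "insert z (BL - {z}) = BL" using z(1) by auto
  have I: "subspace I" by (simp add: I_def)
  have IL: "I \<subseteq> L" unfolding I_def by (rule span_minimal) (use BL(2) L in auto)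
  have DI: "D \<subseteq> I" unfolding I_def
    using BD(3) span_mono[of BD "BL - {z}"] BL(1) z(2) by blast
  have "independent (insert z (BL - {z}))" using BL(3) BLz by simp
  hence zI: "z \<notin> I" unfolding I_def independent_insert by simp
  have zL: "z \<in> L" using z(1) BL(2) by auto
  have "span I \<subset> span L"
    using IL zI zL by (auto simp: span_eq_iff[THEN iffD2, OF I] span_eq_iff[THEN iffD2, OF L])
  hence "dim I < dim L" by (rule dim_psubset)
  moreover have "\<exists>k. x - scale k z \<in> I" if "x \<in> L" for x
  proof -
    have "x \<in> span (insert z (BL - {z}))" using that BL(4) BLz by auto
    thus ?thesis unfolding I_def span_breakdown_eq .
  qed
  ultimately show ?thesis by (rule that[OF I DI IL zL zI])
qed

end

lemma scale_mod_unique: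
  fixes v :: "'a::field^'n::finite"
  assumes U: "vec.subspace U" and v: "v \<notin> U"
    and "u - c *s v \<in> U" "u - c' *s v \<in> U"
  shows "c = c'"
proof (rule ccontr)
  assume ne: "c \<noteq> c'"
  have "(u - c *s v) - (u - c' *s v) \<in> U" by (rule vec.subspace_diff[OF U assms(3,4)])
  hence "(c' - c) *s v \<in> U" by (simp add: vector_sub_rdistrib)
  hence "inverse (c' - c) *s ((c' - c) *s v) \<in> U" by (rule vec.subspace_scale[OF U])
  moreover have nz: "c' - c \<noteq> 0" using ne by simp
  moreover have "inverse (c' - c) *s ((c' - c) *s v) = v"
    by (simp only: vec.scale_scale left_inverse[OF nz] vec.scale_one)
  ultimately show False using v by simp
qed

definition nilpotent_mod :: "('a::field^'n::finite) set \<Rightarrow> ('a,'n) sqm \<Rightarrow> bool" where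
  "nilpotent_mod U X \<longleftrightarrow> (\<exists>k. \<forall>w. iter_mv X k w \<in> U)"

lemma nilpotent_mod_0_iff: "nilpotent_mod {0} X \<longleftrightarrow> nilpotent_mat X"
  by (simp add: nilpotent_mod_def nilpotent_mat_iff_iter_mv)

text \<open>Quotients by \<open>U\<close> are never formed: \<open>weight x\<close> is the eigenvalue of \<open>x\<close> on the image of
  \<open>v\<close> in the quotient by \<open>U\<close>.\<close>

locale common_eigenvector_mod = alg_closure emb
  for emb :: "'f::field_char_0 \<Rightarrow> 'k::field" +
  fixes L :: "('f,'n::finite) sqm set" and U :: "('k^'n) set" and v :: "'k^'n"
  assumes subspace_U: "vec.subspace U" and v_notin_U: "v \<notin> U"
    and L_U: "\<forall>x\<in>L. \<forall>u\<in>U. lift x *v u \<in> U"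
    and eigen: "\<forall>x\<in>L. \<exists>c. lift x *v v - c *s v \<in> U"
begin

definition weight :: "('f,'n) sqm \<Rightarrow> 'k" where
  "weight x = (SOME c. lift x *v v - c *s v \<in> U)"

lemma weight: "x \<in> L \<Longrightarrow> lift x *v v - weight x *s v \<in> U"
  unfolding weight_def by (rule someI_ex) (use eigen in blast)

lemma weight_unique: "x \<in> L \<Longrightarrow> lift x *v v - c *s v \<in> U \<Longrightarrow> c = weight x"
  by (rule scale_mod_unique[OF subspace_U v_notin_U _ weight])

definition weight_space :: "('k^'n) set" where
  "weight_space = {w. \<forall>y\<in>L. lift y *v w - weight y *s w \<in> U}"

lemma subspace_weight_space: "vec.subspace weight_space"
proof (rule vec.subspaceI)
  show "0 \<in> weight_space" using vec.subspace_0[OF subspace_U] by (simp add: weight_space_def)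
next
  fix a b assume "a \<in> weight_space" "b \<in> weight_space"
  thus "a + b \<in> weight_space"
    using vec.subspace_add[OF subspace_U]
    by (fastforce simp: weight_space_def matrix_vector_right_distrib vec.scale_right_distrib
        algebra_simps)
next
  fix c a assume "a \<in> weight_space"
  thus "c *s a \<in> weight_space"
    using vec.subspace_scale[OF subspace_U, of _ c]
    by (fastforce simp: weight_space_def vec.scale vec.scale_right_diff_distrib mult.commute)
qed

lemma v_in_weight_space: "v \<in> weight_space"
  using weight by (simp add: weight_space_def)

lemma weight_brk_eq_0:
  assumes x_L: "\<forall>y\<in>L. brk x y \<in> L" and x_U: "\<forall>u\<in>U. lift x *v u \<in> U" and y: "y \<in> L"
  shows "weight (brk x y) = 0"
proof -
  interpret lie_invariance "lift x" "lift ` L" U v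
  proof
    show "\<forall>Y\<in>lift ` L. brk (lift x) Y \<in> lift ` L" using x_L by (auto simp flip: lift_brk)
    show "(of_nat k :: 'k) \<noteq> 0" if "0 < k" for k using that closure_of_nat_eq_0_iff by simp
  qed (use subspace_U v_notin_U x_U L_U eigen in auto)
  have "lift (brk x y) *v v - 0 *s v \<in> U" using brk_mult_v0_in_U y by simp
  from weight_unique[OF _ this] show ?thesis using x_L y by simp
qed

lemma weight_space_invariant:
  assumes x_L: "\<forall>y\<in>L. brk x y \<in> L" and x_U: "\<forall>u\<in>U. lift x *v u \<in> U"
    and w: "w \<in> weight_space"
  shows "lift x *v w \<in> weight_space"
proof -
  have "lift y *v (lift x *v w) - weight y *s (lift x *v w) \<in> U" if y: "y \<in> L" for y
  proof -
    have "lift x *v (lift y *v w - weight y *s w) \<in> U" using w y x_U by (auto simp: weight_space_def)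
    moreover have "lift (brk x y) *v w \<in> U"
      using w x_L y weight_brk_eq_0[OF x_L x_U y] by (fastforce simp: weight_space_def)
    ultimately have "lift x *v (lift y *v w - weight y *s w) - lift (brk x y) *v w \<in> U"
      by (rule vec.subspace_diff[OF subspace_U])
    thus ?thesis by (simp add: brk_mult_vec matrix_vector_mult_diff_distrib vec.scale)
  qed
  thus ?thesis by (simp add: weight_space_def)
qed

lemma eigenvector_mod_extend:
  assumes w: "w \<in> weight_space" and wz: "lift z *v w - c *s w \<in> U" and y: "x - smat k z \<in> L"
  shows "lift x *v w - (weight (x - smat k z) + emb k * c) *s w \<in> U"
proof -
  have "lift (x - smat k z) *v w - weight (x - smat k z) *s w \<in> U"
    using w y unfolding weight_space_def by blast
  hence "lift (x - smat k z) *v w - weight (x - smat k z) *s w + emb k *s (lift z *v w - c *s w) \<in> U"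
    by (intro vec.subspace_add[OF subspace_U] vec.subspace_scale[OF subspace_U wz])
  thus ?thesis
    by (simp add: smat_mult_vec matrix_vector_mult_diff_rdistrib vec.scale_right_diff_distrib
        vector_sadd_rdistrib algebra_simps)
qed

lemma weight_add: "x \<in> L \<Longrightarrow> y \<in> L \<Longrightarrow> x + y \<in> L \<Longrightarrow> weight (x + y) = weight x + weight y"
  by (rule weight_unique[symmetric], assumption)
    (use vec.subspace_add[OF subspace_U weight weight] in
      \<open>simp add: matrix_vector_mult_add_rdistrib vector_sadd_rdistrib algebra_simps\<close>)

lemma iter_mv_weight: "x \<in> L \<Longrightarrow> iter_mv (lift x) k v - weight x ^ k *s v \<in> U"
proof (induction k)
  case (Suc k)
  have "lift x *v (iter_mv (lift x) k v - weight x ^ k *s v)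
      + weight x ^ k *s (lift x *v v - weight x *s v) \<in> U"
    using Suc L_U weight by (intro vec.subspace_add[OF subspace_U] vec.subspace_scale[OF subspace_U]) auto
  thus ?case
    by (simp add: matrix_vector_mult_diff_distrib vec.scale vec.scale_right_diff_distrib mult.commute)
qed (simp add: vec.subspace_0[OF subspace_U])

lemma weight_eq_0_if_nilpotent_mod:
  assumes x: "x \<in> L" and "nilpotent_mod U (lift x)"
  shows "weight x = 0"
proof -
  obtain k where k: "iter_mv (lift x) k v \<in> U" using assms(2) by (auto simp: nilpotent_mod_def)
  have "iter_mv (lift x) k v - (iter_mv (lift x) k v - weight x ^ k *s v) \<in> U"
    by (rule vec.subspace_diff[OF subspace_U k iter_mv_weight[OF x]])
  hence "iter_mv (lift x) k v - 0 *s v \<in> U" using k by simp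
  hence "weight x ^ k = 0"
    by (rule scale_mod_unique[OF subspace_U v_notin_U iter_mv_weight[OF x]])
  thus ?thesis by simp
qed

lemma invariant_span_insert:
  assumes x: "x \<in> L" and u: "u \<in> vec.span (insert v U)"
  shows "lift x *v u \<in> vec.span (insert v U)"
proof (rule mult_vec_in_if_span[OF _ _ u])
  have "lift x *v v = (lift x *v v - weight x *s v) + weight x *s v" by simp
  also have "\<dots> \<in> vec.span (insert v U)"
    using weight[OF x] by (intro vec.span_add vec.span_scale) (auto intro: vec.span_base)
  finally show "\<forall>y\<in>insert v U. lift x *v y \<in> vec.span (insert v U)"
    using L_U x by (auto intro: vec.span_base)
qed simp

lemma nilpotent_mod_if_weight_eq_0:
  assumes x: "x \<in> L" and "weight x = 0" and "nilpotent_mod (vec.span (insert v U)) (lift x)"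
  shows "nilpotent_mod U (lift x)"
proof -
  obtain k where k: "\<forall>w. iter_mv (lift x) k w \<in> vec.span (insert v U)"
    using assms(3) by (auto simp: nilpotent_mod_def)
  have "\<forall>y\<in>insert v U. lift x *v y \<in> U" using weight[OF x] assms(2) L_U x by auto
  hence "\<forall>w. lift x *v iter_mv (lift x) k w \<in> U"
    using mult_vec_in_if_span[OF _ subspace_U] k by blast
  thus ?thesis unfolding nilpotent_mod_def by (metis funpow.simps(2) o_apply)
qed

end

context alg_closure
begin

theorem lie_eigenvector_mod:
  assumes "lie_subalg L" "lie_solvable L" "vec.subspace U" "U \<noteq> UNIV"
    "\<forall>x\<in>L. \<forall>u\<in>U. lift x *v u \<in> U"
  shows "\<exists>v. v \<notin> U \<and> (\<forall>x\<in>L. \<exists>c. lift x *v v - c *s v \<in> U)"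
  using assms
proof (induction "gl.dim L" arbitrary: L rule: less_induct)
  case less
  note subL = less.prems(1) and solL = less.prems(2) and U = less.prems(3) and L_U = less.prems(5)
  have Ls: "gl.subspace L" using subL by (simp add: lie_subalg_def)
  show ?case
  proof (cases "L \<subseteq> {0}")
    case True
    obtain v where "v \<notin> U" using less.prems(4) by blast
    moreover have "lift x *v v - 0 *s v \<in> U" if "x \<in> L" for x
      using True that vec.subspace_0[OF U] by auto
    ultimately show ?thesis by blast
  next
    case False
    obtain I z where I: "gl.subspace I" "Brk L L \<subseteq> I" "I \<subseteq> L" and z: "z \<in> L" "z \<notin> I"
      and dimI: "gl.dim I < gl.dim L" and split: "\<And>x. x \<in> L \<Longrightarrow> \<exists>k. x - smat k z \<in> I"
      using gl.exists_hyperplane_between[OF Brk_subspace Ls Brk_subset[OF subL]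
            Brk_self_neq_if_solvable[OF solL False]] by blast
    have L_I: "\<forall>y\<in>I. brk x y \<in> I" if "x \<in> L" for x using that I brk_in_Brk by blast
    have "lie_subalg I" using I L_I by (auto simp: lie_subalg_def)
    moreover have "lie_solvable I" using lie_solvable_subspace[OF solL I(3,1)] .
    ultimately obtain v0 where "v0 \<notin> U" "\<forall>y\<in>I. \<exists>c. lift y *v v0 - c *s v0 \<in> U"
      using less.hyps[OF dimI] less.prems(3,4) L_U I(3) by blast
    then interpret I: common_eigenvector_mod emb I U v0
      by unfold_locales (use U L_U I(3) in auto)
    obtain w c where w: "w \<in> I.weight_space" "w \<notin> U" and wc: "lift z *v w - c *s w \<in> U"
      using eigenvector_mod[OF U I.subspace_weight_space _ I.v_in_weight_space I.v_notin_U]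
        I.weight_space_invariant[OF L_I[OF z(1)]] L_U z(1) by blast
    have "\<exists>c. lift x *v w - c *s w \<in> U" if "x \<in> L" for x
      using split[OF that] I.eigenvector_mod_extend[OF w(1) wc] by blast
    thus ?thesis using w(2) by blast
  qed
qed

end

context alg_closure
begin

text \<open>Induction on the codimension of \<open>U\<close>: a common eigenvector \<open>v\<close> modulo \<open>U\<close> (Lie's
  theorem) reduces the claim to \<open>U + \<langle>v\<rangle>\<close>, since an element is nilpotent modulo \<open>U\<close> iff it is
  nilpotent modulo \<open>U + \<langle>v\<rangle>\<close> and its weight on \<open>v\<close> vanishes; weights are additive and vanish
  on brackets.\<close>

theorem nilpotent_mod_add_brk:
  fixes s :: "('f,'n::finite) sqm set"
  assumes sub: "lie_subalg s" and sol: "lie_solvable s"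
  shows "vec.subspace U \<Longrightarrow> \<forall>x\<in>s. \<forall>u\<in>U. lift x *v u \<in> U \<Longrightarrow> x \<in> s \<Longrightarrow> y \<in> s \<Longrightarrow>
    (nilpotent_mod U (lift x) \<longrightarrow> nilpotent_mod U (lift y) \<longrightarrow> nilpotent_mod U (lift (x + y)))
    \<and> nilpotent_mod U (lift (brk x y))"
proof (induction "CARD('n) - vec.dim U" arbitrary: U rule: less_induct)
  case less
  note U = less.prems(1) and s_U = less.prems(2) and x = less.prems(3) and y = less.prems(4)
  show ?case
  proof (cases "U = UNIV")
    case True
    thus ?thesis by (simp add: nilpotent_mod_def)
  next
    case False
    then obtain v where "v \<notin> U" "\<forall>x\<in>s. \<exists>c. lift x *v v - c *s v \<in> U"
      using lie_eigenvector_mod[OF sub sol U False s_U] by blast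
    then interpret common_eigenvector_mod emb s U v by unfold_locales (use U s_U in auto)
    define U' where "U' = vec.span (insert v U)"
    have "vec.dim U' = vec.dim U + 1"
      unfolding U'_def vec.dim_span using v_notin_U
      by (simp add: vec.dim_insert vec.span_eq_iff[THEN iffD2, OF U])
    moreover have "vec.dim U' \<le> CARD('n)"
      using vec.dim_subset_UNIV[of U'] by (simp add: vec.dimension_def card_cart_basis)
    ultimately have "CARD('n) - vec.dim U' < CARD('n) - vec.dim U" by simp
    from less.hyps[OF this] x y invariant_span_insert
    have IH: "(nilpotent_mod U' (lift x) \<longrightarrow> nilpotent_mod U' (lift y) \<longrightarrow>
        nilpotent_mod U' (lift (x + y))) \<and> nilpotent_mod U' (lift (brk x y))"
      unfolding U'_def by blast
    have ssub: "gl.subspace s" and s_brk: "\<And>z. z \<in> s \<Longrightarrow> \<forall>y\<in>s. brk z y \<in> s"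
      using sub by (auto simp: lie_subalg_def)
    have xy: "x + y \<in> s" "brk x y \<in> s" using gl.subspace_add[OF ssub x y] s_brk x y by auto
    have "U \<subseteq> U'" unfolding U'_def using vec.span_superset by blast
    hence "nilpotent_mod U X \<Longrightarrow> nilpotent_mod U' X" for X by (auto simp: nilpotent_mod_def)
    thus ?thesis
      using IH xy x y weight_add[OF x y] weight_brk_eq_0[OF s_brk[OF x] bspec[OF s_U x] y]
        nilpotent_mod_if_weight_eq_0 weight_eq_0_if_nilpotent_mod
      unfolding U'_def by (metis add_0)
  qed
qed

corollary nilpotent_mat_add:
  fixes s :: "('f,'n::finite) sqm set"
  shows "lie_subalg s \<Longrightarrow> lie_solvable s \<Longrightarrow> x \<in> s \<Longrightarrow> y \<in> s \<Longrightarrow>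
    nilpotent_mat x \<Longrightarrow> nilpotent_mat y \<Longrightarrow> nilpotent_mat (x + y)"
  using nilpotent_mod_add_brk[of s "{0}" x y]
  by (simp add: nilpotent_mod_0_iff vec.subspace_def del: lift_add)

corollary nilpotent_mat_brk:
  fixes s :: "('f,'n::finite) sqm set"
  shows "lie_subalg s \<Longrightarrow> lie_solvable s \<Longrightarrow> x \<in> s \<Longrightarrow> y \<in> s \<Longrightarrow> nilpotent_mat (brk x y)"
  using nilpotent_mod_add_brk[of s "{0}" x y]
  by (simp add: nilpotent_mod_0_iff vec.subspace_def del: lift_brk)

end

section \<open>The Jordan parts of a basis of the Cartan subalgebra\<close>

context vector_space
begin

lemma span_direct_parts:
  assumes D: "subspace D" and N: "subspace N"
    and parts: "\<forall>b\<in>B. b = p b + q b \<and> p b \<in> D \<and> q b \<in> N"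
  shows "x \<in> span B \<Longrightarrow> \<exists>y z. x = y + z \<and> y \<in> span (p ` B) \<and> z \<in> span (q ` B)"
    and "span (p ` B) \<subseteq> D" and "span (q ` B) \<subseteq> N"
proof -
  have "b \<in> span (p ` B \<union> q ` B)" if b: "b \<in> B" for b
  proof -
    have "p b + q b \<in> span (p ` B \<union> q ` B)" using b by (intro span_add span_base) auto
    thus ?thesis using parts b by metis
  qed
  hence "span B \<subseteq> span (p ` B \<union> q ` B)" by (intro span_minimal) auto
  thus "x \<in> span B \<Longrightarrow> \<exists>y z. x = y + z \<and> y \<in> span (p ` B) \<and> z \<in> span (q ` B)"
    unfolding span_Un by blast
  show "span (p ` B) \<subseteq> D" by (rule span_minimal[OF _ D]) (use parts in auto)
  show "span (q ` B) \<subseteq> N" by (rule span_minimal[OF _ N]) (use parts in auto)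
qed

lemma span_direct_parts_eq_left:
  assumes D: "subspace D" and N: "subspace N" and DN: "D \<inter> N = {0}"
    and parts: "\<forall>b\<in>B. b = p b + q b \<and> p b \<in> D \<and> q b \<in> N" and DB: "D \<subseteq> span B"
  shows "D = span (p ` B)"
proof
  note split = span_direct_parts[OF D N parts]
  show "D \<subseteq> span (p ` B)"
  proof
    fix x assume x: "x \<in> D"
    then obtain y z where xyz: "x = y + z" and y: "y \<in> span (p ` B)" and z: "z \<in> span (q ` B)"
      using split(1) DB by blast
    have "z = x - y" using xyz by simp
    hence "z \<in> D" using subspace_diff[OF D x] y split(2) by blast
    hence "z = 0" using DN z split(3) by blast
    thus "x \<in> span (p ` B)" using xyz y by simp
  qed
qed (rule span_direct_parts(2)[OF D N parts])

lemma span_direct_parts_eq_right: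
  assumes D: "subspace D" and N: "subspace N" and DN: "D \<inter> N = {0}"
    and parts: "\<forall>b\<in>B. b = p b + q b \<and> p b \<in> D \<and> q b \<in> N"
    and F: "F \<subseteq> N" and NBF: "N \<subseteq> {a + f |a f. a \<in> span B \<and> f \<in> F}"
  shows "N = span (q ` B \<union> F)"
proof
  note split = span_direct_parts[OF D N parts]
  show "N \<subseteq> span (q ` B \<union> F)"
  proof
    fix x assume x: "x \<in> N"
    then obtain a f where xaf: "x = a + f" and a: "a \<in> span B" and f: "f \<in> F" using NBF by blast
    obtain y z where ayz: "a = y + z" and y: "y \<in> span (p ` B)" and z: "z \<in> span (q ` B)"
      using split(1)[OF a] by blast
    have "y = x - (z + f)" using xaf ayz by (simp add: algebra_simps)
    moreover have "z + f \<in> N" using subspace_add[OF N] z f F split(3) by blast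
    ultimately have "y \<in> N" using subspace_diff[OF N x] by simp
    hence "y = 0" using DN y split(2) by blast
    hence "x = z + f" using xaf ayz by simp
    moreover have "z \<in> span (q ` B \<union> F)" using z span_mono[of "q ` B" "q ` B \<union> F"] by blast
    moreover have "f \<in> span (q ` B \<union> F)" using f by (intro span_base) simp
    ultimately show "x \<in> span (q ` B \<union> F)" by (simp add: span_add)
  qed
  show "span (q ` B \<union> F) \<subseteq> N" by (rule span_minimal[OF _ N]) (use parts F in auto)
qed

end

context alg_closure
begin

lemma subspace_nilpotents:
  fixes s :: "('f,'n::finite) sqm set"
  assumes "lie_subalg s" "lie_solvable s"
  shows "gl.subspace {x \<in> s. nilpotent_mat x}"
proof (rule gl.subspaceI)
  have s: "gl.subspace s" using assms(1) by (simp add: lie_subalg_def)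
  show "0 \<in> {x \<in> s. nilpotent_mat x}" by (simp add: gl.subspace_0[OF s] nilpotent_mat_0)
  show "x + y \<in> {x \<in> s. nilpotent_mat x}" if "x \<in> {x \<in> s. nilpotent_mat x}" "y \<in> {x \<in> s. nilpotent_mat x}" for x y
    using that nilpotent_mat_add[OF assms] gl.subspace_add[OF s] by auto
  show "smat c x \<in> {x \<in> s. nilpotent_mat x}" if "x \<in> {x \<in> s. nilpotent_mat x}" for c x
    using that gl.subspace_scale[OF s] nilpotent_mat_smat by auto
qed

lemma fitting_one_subset_nilpotents:
  fixes s h :: "('f,'n::finite) sqm set"
  assumes "lie_subalg s" "lie_solvable s" "h \<subseteq> s"
  shows "fitting_one h s \<subseteq> {x \<in> s. nilpotent_mat x}"
proof -
  have "brk x y \<in> {x \<in> s. nilpotent_mat x}" if "x \<in> h" "y \<in> s" for x y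
    using that assms nilpotent_mat_brk[OF assms(1,2)] by (auto simp: lie_subalg_def)
  hence "Brk h s \<subseteq> {x \<in> s. nilpotent_mat x}"
    unfolding Brk_def by (intro gl.span_minimal[OF _ subspace_nilpotents[OF assms(1,2)]]) blast
  thus ?thesis using fitting_one_subset_Brk by blast
qed

lemma jordan_parts_in_summands:
  fixes d N :: "('f,'n::finite) sqm set"
  assumes d: "\<forall>x\<in>d. semisimple_mat emb x" and N: "\<forall>x\<in>N. nilpotent_mat x"
    and b: "b \<in> setsum d (centralizer N d)"
    and jordan: "b = p + q" "semisimple_mat emb p" "nilpotent_mat q" "p ** q = q ** p"
  shows "p \<in> d \<and> q \<in> N"
proof -
  obtain x y where x: "x \<in> d" and y: "y \<in> centralizer N d" and bxy: "b = x + y"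
    using b by (auto simp: setsum_def)
  have "y \<in> N" "brk y x = 0" using x y by (auto simp: centralizer_def)
  have "lift x = lift p"
  proof (rule jordan_decomposition_unique)
    show "diagonalizable (lift x)" "diagonalizable (lift p)"
      using d x jordan(2) by (auto simp: semisimple_mat_iff_diagonalizable)
    show "nilpotent_mat (lift y)" "nilpotent_mat (lift q)" using N \<open>y \<in> N\<close> jordan(3) by auto
    show "lift x ** lift y = lift y ** lift x" using \<open>brk y x = 0\<close>
      by (metis brk_eq_0_iff lift_mult)
    show "lift p ** lift q = lift q ** lift p" using jordan(4) by (metis lift_mult)
    show "lift x + lift y = lift p + lift q" using bxy jordan(1) by (metis lift_add)
  qed
  thus ?thesis using x \<open>y \<in> N\<close> bxy jordan(1) by simp
qed

end

theorem lemma4p3: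
  fixes emb :: "'f::field_char_0 \<Rightarrow> 'k::field"
    and G :: "('k,'n::finite) sqm set"
    and s h d :: "('f,'n) sqm set"
    and B :: "('f,'n) sqm set"
    and js jn :: "('f,'n) sqm \<Rightarrow> ('f,'n) sqm"
  assumes clos: "is_alg_closure emb"
    and grp: "alg_group_over emb G"
    and rad: "solvable_radical (lie_alg_F emb G) s"
    and compl: "\<exists>t. lie_subalg t \<and> t \<subseteq> s \<and> (\<forall>x\<in>t. \<forall>y\<in>t. brk x y = 0)
                  \<and> (\<forall>x\<in>t. semisimple_mat emb x)
                  \<and> t \<inter> {x \<in> s. nilpotent_mat x} = {0} \<and> setsum t {x \<in> s. nilpotent_mat x} = s"
    and cartan: "cartan_subalg s h"
    and d_sub: "lie_subalg d" "d \<subseteq> s" "\<forall>x\<in>d. \<forall>y\<in>d. brk x y = 0"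
    and d_ss: "\<forall>x\<in>d. semisimple_mat emb x"
    and d_compl: "d \<inter> {x \<in> s. nilpotent_mat x} = {0}" "setsum d {x \<in> s. nilpotent_mat x} = s"
    and h_eq: "h = centralizer s d" "h = setsum d (centralizer {x \<in> s. nilpotent_mat x} d)"
    and basis: "B \<subseteq> h" "\<not> lindep B" "lspan B = h"
    and jordan: "\<forall>b\<in>B. b = js b + jn b \<and> semisimple_mat emb (js b) \<and> nilpotent_mat (jn b)
                   \<and> js b ** jn b = jn b ** js b"
  shows "d = lspan (js ` B) \<and>
         {x \<in> s. nilpotent_mat x} = lspan (jn ` B \<union> fitting_one h s)"
proof -
  interpret alg_closure emb by unfold_locales (rule clos)
  have sub: "lie_subalg s" and sol: "lie_solvable s"
    using rad by (auto simp: solvable_radical_def lie_ideal_def lie_subalg_def)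
  let ?N = "{x \<in> s. nilpotent_mat x}"
  have hs: "h \<subseteq> s" and dh: "d \<subseteq> h" using h_eq(1) d_sub(2,3) by (auto simp: centralizer_def)
  have parts: "\<forall>b\<in>B. b = js b + jn b \<and> js b \<in> d \<and> jn b \<in> ?N"
    using jordan_parts_in_summands[OF d_ss, of ?N] h_eq(2) basis(1) jordan by blast
  have NBF: "?N \<subseteq> {a + f |a f. a \<in> lspan B \<and> f \<in> fitting_one h s}"
  proof
    fix x assume "x \<in> ?N"
    then obtain a where "a \<in> h" "x - a \<in> fitting_one h s"
      using centralizer_plus_fitting_one[OF sub d_sub(2) d_ss d_sub(3) h_eq(1)] by blast
    thus "x \<in> {a + f |a f. a \<in> lspan B \<and> f \<in> fitting_one h s}" using basis(3) by force
  qed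
  have "gl.subspace d" using d_sub(1) by (simp add: lie_subalg_def)
  note direct_sum = this subspace_nilpotents[OF sub sol] d_compl(1) parts
  have "d = lspan (js ` B)"
    by (rule gl.span_direct_parts_eq_left[OF direct_sum]) (use dh basis(3) in blast)
  moreover have "?N = lspan (jn ` B \<union> fitting_one h s)"
    by (rule gl.span_direct_parts_eq_right[OF direct_sum fitting_one_subset_nilpotents[OF sub sol hs] NBF])
  ultimately show ?thesis ..
qed

end
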